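(* For every binary relation $S$ on $\Sigma^*$ there is a CRPQ($S$) query $\phi(x,x')$ and a deterministic logarithmic-space algorithm that, given a relation $R\in\mathsf{REC}_2$ over $\Sigma$, constructs a labeled graph $G$ and two nodes $v,v'$ of $G$ such that $G\models\phi(v,v')$ if and only if $R\cap S\neq\emptyset$.
   Context: $\Sigma$ is a finite alphabet. $\mathsf{REC}_2$ is the class of binary relations on $\Sigma^*$ that are finite unions of products $L\times K$ of regular languages, given by NFAs for these languages. The graph $G$ may be labeled over an alphabet extending $\Sigma$ by finitely many fresh symbols, and $S$ is then regarded as a relation on words over this larger alphabet. A labeled graph over an alphabet $\Delta$ is $G=(V,E)$ with $V$ finite and $E\subseteq V\times\Delta\times V$; a path is a sequence of consecutive edges and its label is the word of edge labels. A CRPQ($S$) query has the form $\phi(\bar x)=\exists\bar y\,(\bigwedge_{i=1}^m (u_i\xrightarrow{\chi_i:L_i}u_i')\wedge\bigwedge_{(i,j)\in I}S(\chi_i,\chi_j))$ with $u_i,u_i'$ among $\bar x,\bar y$, $L_i$ regular languages and $I\subseteq[m]^2$; $G\models\phi(\bar a)$ iff there are nodes $\bar b$ for $\bar y$ and paths $\rho_i$ from (the interpretation of) $u_i$ to $u_i'$ with labels in $L_i$ such that the pair of labels of $\rho_i,\rho_j$ is in $S$ for every $(i,j)\in I$. *)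

theory Defs
  imports Complex_Main
begin

datatype 'a nfa = NFA (initial: "nat list") (final: "nat list") (trans: "(nat \<times> 'a \<times> nat) list")

inductive nrun :: "'a nfa \<Rightarrow> nat \<Rightarrow> 'a list \<Rightarrow> nat \<Rightarrow> bool" for A where
  nrun_nil: "nrun A p [] p"
| nrun_cons: "(p, a, r) \<in> set (trans A) \<Longrightarrow> nrun A r w q \<Longrightarrow> nrun A p (a # w) q"

definition nlang :: "'a nfa \<Rightarrow> 'a list set" where
  "nlang A = {w. \<exists>p\<in>set (initial A). \<exists>q\<in>set (final A). nrun A p w q}"

definition rec_rel :: "('a nfa \<times> 'a nfa) list \<Rightarrow> ('a list \<times> 'a list) set" where
  "rec_rel Rs = (\<Union>(A, B)\<in>set Rs. nlang A \<times> nlang B)"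

text \<open>Nodes are 0..<gn G; edges are labeled triples.\<close>
datatype 'l graph = Graph (gn: nat) (gedges: "(nat \<times> 'l \<times> nat) list")

definition graph_wf :: "'l graph \<Rightarrow> bool" where
  "graph_wf G \<longleftrightarrow> (\<forall>(u, a, w)\<in>set (gedges G). u < gn G \<and> w < gn G)"

inductive gpath :: "'l graph \<Rightarrow> nat \<Rightarrow> 'l list \<Rightarrow> nat \<Rightarrow> bool" for G where
  gpath_nil: "u < gn G \<Longrightarrow> gpath G u [] u"
| gpath_cons: "(u, a, w) \<in> set (gedges G) \<Longrightarrow> gpath G w ws v \<Longrightarrow> gpath G u (a # ws) v"

text \<open>Variables are nats; variable 0 is the free variable x, variable 1 is x',
  all other variables are existentially quantified. Atoms (u_i, L_i, u_i'),
  and the list of index pairs I.\<close>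
datatype 'a crpq = CRPQ (atoms: "(nat \<times> 'a nfa \<times> nat) list") (pairs: "(nat \<times> nat) list")

definition crpq_wf :: "'a crpq \<Rightarrow> bool" where
  "crpq_wf Q \<longleftrightarrow> (\<forall>(i, j)\<in>set (pairs Q). i < length (atoms Q) \<and> j < length (atoms Q))"

definition crpq_holds ::
  "('a list \<times> 'a list) set \<Rightarrow> 'a graph \<Rightarrow> 'a crpq \<Rightarrow> nat \<Rightarrow> nat \<Rightarrow> bool" where
  "crpq_holds S G Q a a' \<longleftrightarrow>
     (\<exists>\<nu> :: nat \<Rightarrow> nat. \<nu> 0 = a \<and> \<nu> 1 = a' \<and>
       (\<exists>ws :: 'a list list. length ws = length (atoms Q) \<and>
          (\<forall>i < length (atoms Q). case atoms Q ! i of (u, A, u') \<Rightarrow>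
              gpath G (\<nu> u) (ws ! i) (\<nu> u') \<and> ws ! i \<in> nlang A) \<and>
          (\<forall>(i, j)\<in>set (pairs Q). (ws ! i, ws ! j) \<in> S)))"

text \<open>S regarded as a relation on words over the extended alphabet 's + nat
  (Inr k are the fresh symbols).\<close>
definition liftS :: "('s list \<times> 's list) set \<Rightarrow> (('s + nat) list \<times> ('s + nat) list) set" where
  "liftS S = {(map Inl u, map Inl w) | u w. (u, w) \<in> S}"

datatype 's tok = TSym 's | TBit bool | TOpen | TClose | TComma | TFresh

function enc_nat :: "nat \<Rightarrow> 's tok list" where
  "enc_nat n = (if n = 0 then [] else TBit (odd n) # enc_nat (n div 2))"
  by auto
termination by (relation "measure id") auto

definition enc_list :: "('x \<Rightarrow> 's tok list) \<Rightarrow> 'x list \<Rightarrow> 's tok list" where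
  "enc_list f xs = TOpen # concat (map (\<lambda>x. f x @ [TComma]) xs) @ [TClose]"

definition enc_tr :: "nat \<times> 's \<times> nat \<Rightarrow> 's tok list" where
  "enc_tr t = (case t of (p, a, q) \<Rightarrow> enc_nat p @ TComma # TSym a # TComma # enc_nat q)"

definition enc_nfa :: "'s nfa \<Rightarrow> 's tok list" where
  "enc_nfa A = TOpen # enc_list enc_nat (initial A) @ enc_list enc_nat (final A)
                 @ enc_list enc_tr (trans A) @ [TClose]"

definition enc_rec :: "('s nfa \<times> 's nfa) list \<Rightarrow> 's tok list" where
  "enc_rec Rs = enc_list (\<lambda>(A, B). enc_nfa A @ enc_nfa B) Rs"

fun enc_lab :: "'s + nat \<Rightarrow> 's tok list" where
  "enc_lab (Inl a) = [TSym a]"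
| "enc_lab (Inr k) = TFresh # enc_nat k"

definition enc_edge :: "nat \<times> ('s + nat) \<times> nat \<Rightarrow> 's tok list" where
  "enc_edge e = (case e of (u, l, w) \<Rightarrow> enc_nat u @ TComma # enc_lab l @ TComma # enc_nat w)"

definition enc_out :: "('s + nat) graph \<Rightarrow> nat \<Rightarrow> nat \<Rightarrow> 's tok list" where
  "enc_out G v v' = TOpen # enc_nat (gn G) @ TComma # enc_list enc_edge (gedges G)
                      @ TComma # enc_nat v @ TComma # enc_nat v' @ [TClose]"

datatype dir = Lft | Stay | Rgt

text \<open>States 0..<nq (0 initial, 1 halting), work symbols 0..<nw (0 blank).
  delta q (input symbol, None = beyond the end) (work symbol) =
  (new state, input head move, written work symbol, work head move, optional output symbol).\<close>
datatype ('i, 'o) ltm = LTM (tm_nq: nat) (tm_nw: nat)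
  (tm_delta: "nat \<Rightarrow> 'i option \<Rightarrow> nat \<Rightarrow> nat \<times> dir \<times> nat \<times> dir \<times> 'o option")

definition tm_wf :: "('i, 'o) ltm \<Rightarrow> bool" where
  "tm_wf M \<longleftrightarrow> 2 \<le> tm_nq M \<and> 1 \<le> tm_nw M \<and>
     (\<forall>q < tm_nq M. \<forall>a w. w < tm_nw M \<longrightarrow>
        (case tm_delta M q a w of (q', _, s, _, _) \<Rightarrow> q' < tm_nq M \<and> s < tm_nw M))"

fun move :: "dir \<Rightarrow> nat \<Rightarrow> nat" where
  "move Lft n = n - 1"
| "move Stay n = n"
| "move Rgt n = Suc n"

type_synonym 'o config = "nat \<times> nat \<times> (nat \<Rightarrow> nat) \<times> nat \<times> 'o list"

definition tm_step :: "('i, 'o) ltm \<Rightarrow> 'i list \<Rightarrow> 'o config \<Rightarrow> 'o config" where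
  "tm_step M x c = (case c of (q, ih, wk, wh, out) \<Rightarrow>
     if q = 1 then c else
     (case tm_delta M q (if ih < length x then Some (x ! ih) else None) (wk wh) of
        (q', di, s, dw, ob) \<Rightarrow>
          (q', min (move di ih) (length x), wk(wh := s), move dw wh,
           out @ (case ob of None \<Rightarrow> [] | Some b \<Rightarrow> [b]))))"

definition tm_init :: "'o config" where
  "tm_init = (0, 0, \<lambda>_. 0, 0, [])"

definition tm_conf :: "('i, 'o) ltm \<Rightarrow> 'i list \<Rightarrow> nat \<Rightarrow> 'o config" where
  "tm_conf M x t = (tm_step M x ^^ t) tm_init"

definition conf_state :: "'o config \<Rightarrow> nat" where "conf_state c = fst c"
definition conf_whead :: "'o config \<Rightarrow> nat" where "conf_whead c = fst (snd (snd (snd c)))"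
definition conf_out :: "'o config \<Rightarrow> 'o list" where "conf_out c = snd (snd (snd (snd c)))"

definition tm_computes :: "('i, 'o) ltm \<Rightarrow> 'i list \<Rightarrow> 'o list \<Rightarrow> bool" where
  "tm_computes M x y \<longleftrightarrow>
     (\<exists>t. conf_state (tm_conf M x t) = 1 \<and> conf_out (tm_conf M x t) = y)"

definition tm_logspace_on :: "('i, 'o) ltm \<Rightarrow> nat \<Rightarrow> 'i list \<Rightarrow> bool" where
  "tm_logspace_on M c x \<longleftrightarrow>
     (\<forall>t. real (conf_whead (tm_conf M x t)) \<le> real c * log 2 (real (length x) + 2))"

end

theory Submission
  imports Defs
begin

text \<open>Every pair \<open>(A\<^sub>i, B\<^sub>i)\<close> of \<open>R\<close> becomes a node \<open>c\<^sub>i\<close> with a copy of \<open>A\<^sub>i\<close> and one of \<open>B\<^sub>i\<close> attached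
  to it: fresh letters lead from \<open>c\<^sub>i\<close> to the initial states of each copy and back from its final
  states. The query asks for a node with one detour through a copy of a left automaton spelling
  \<open>u\<close> and one through a copy of a right automaton spelling \<open>w\<close>, with \<open>(u, w) \<in> S\<close>; injectivity of
  the node numbering forces both detours to belong to the same pair, so the query holds iff some
  \<open>(u, w) \<in> L(A\<^sub>i) \<times> L(B\<^sub>i)\<close> lies in \<open>S\<close>.

  The nodes are numbered so that a machine can print them without arithmetic: the binary digits
  of a node interleave those of \<open>i\<close> with marker bits and end with the digits of the state, which
  are copied from the input. Only the counter \<open>i\<close>, of \<open>O(log n)\<close> bits, is kept on the work tape,
  and \<open>2 ^ (4 * n) - 1\<close> bounds all node numbers, where \<open>n\<close> is the length of the input.\<close>

section \<open>Binary numerals\<close>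

fun lsb_bits :: "nat \<Rightarrow> bool list" where
  "lsb_bits n = (if n = 0 then [] else odd n # lsb_bits (n div 2))"

declare lsb_bits.simps [simp del] enc_nat.simps [simp del]

lemma lsb_bits_0 [simp]: "lsb_bits 0 = []"
  by (simp add: lsb_bits.simps)

lemma lsb_bits_pos: "0 < n \<Longrightarrow> lsb_bits n = odd n # lsb_bits (n div 2)"
  by (simp add: lsb_bits.simps)

lemma lsb_bits_1 [simp]: "lsb_bits 1 = [True]" "lsb_bits (Suc 0) = [True]"
  by (simp_all add: lsb_bits_pos)

lemma enc_nat_eq_lsb_bits: "enc_nat n = map TBit (lsb_bits n)"
  by (induction n rule: lsb_bits.induct) (subst enc_nat.simps, subst lsb_bits.simps, simp)

fun lsb_value :: "bool list \<Rightarrow> nat" where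
  "lsb_value [] = 0"
| "lsb_value (b # bs) = of_bool b + 2 * lsb_value bs"

lemma lsb_value_lsb_bits [simp]: "lsb_value (lsb_bits n) = n"
  by (induction n rule: lsb_bits.induct) (subst lsb_bits.simps, simp)

lemma lsb_bits_inj: "lsb_bits m = lsb_bits n \<Longrightarrow> m = n"
  by (metis lsb_value_lsb_bits)

lemma lsb_value_pos: "bs \<noteq> [] \<Longrightarrow> last bs \<Longrightarrow> 0 < lsb_value bs"
  by (induction bs rule: list_nonempty_induct) auto

lemma lsb_bits_lsb_value: "bs \<noteq> [] \<Longrightarrow> last bs \<Longrightarrow> lsb_bits (lsb_value bs) = bs"
proof (induction bs)
  case (Cons b bs)
  then show ?case
    using lsb_value_pos[OF Cons.prems] lsb_bits_pos[of "lsb_value (b # bs)"]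
    by (cases "bs = []") auto
qed simp

lemma lsb_value_less: "lsb_value bs < 2 ^ length bs"
  by (induction bs) auto

lemma lsb_value_less_mask: "length bs < m \<Longrightarrow> lsb_value bs < 2 ^ m - 1"
proof -
  assume "length bs < m"
  then have "2 * 2 ^ length bs \<le> (2::nat) ^ m"
    using power_increasing[of "Suc (length bs)" m "2::nat"] by simp
  then show ?thesis
    using lsb_value_less[of bs] by linarith
qed

lemma lsb_bits_mask: "lsb_bits (2 ^ m - 1) = replicate m True"
proof -
  have "lsb_value (replicate m True) + 1 = 2 ^ m"
    by (induction m) auto
  then have "lsb_value (replicate m True) = 2 ^ m - 1"
    by simp
  then show ?thesis
    using lsb_bits_lsb_value[of "replicate m True"] by (cases "m = 0") auto
qed

fun incr :: "bool list \<Rightarrow> bool list" where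
  "incr [] = [True]"
| "incr (False # bs) = True # bs"
| "incr (True # bs) = False # incr bs"

lemma lsb_bits_Suc: "lsb_bits (Suc n) = incr (lsb_bits n)"
proof (induction n rule: less_induct)
  case (less n)
  consider "n = 0" | "0 < n" "even n" | "odd n"
    by auto
  then show ?case
  proof cases
    case 2
    then have "Suc n div 2 = n div 2" by presburger
    with 2 show ?thesis
      by (simp add: lsb_bits_pos[of "Suc n"] lsb_bits_pos[of n])
  next
    case 3
    then have "Suc n div 2 = Suc (n div 2)" "n div 2 < n"
      by presburger+
    with 3 less.IH[of "n div 2"] show ?thesis
      by (simp add: lsb_bits_pos[of "Suc n"] lsb_bits_pos[of n])
  qed simp
qed

lemma length_incr: "length bs \<le> length (incr bs)"
  by (induction bs rule: incr.induct) auto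

lemma length_lsb_bits_mono: "m \<le> n \<Longrightarrow> length (lsb_bits m) \<le> length (lsb_bits n)"
  by (induction n rule: dec_induct) (auto simp: lsb_bits_Suc intro: order_trans length_incr)

lemma length_lsb_bits_le: "length (lsb_bits n) \<le> n"
  by (induction n rule: lsb_bits.induct) (subst lsb_bits.simps, auto)

lemma two_pow_length_lsb_bits: "0 < n \<Longrightarrow> 2 ^ length (lsb_bits n) \<le> 2 * n"
proof (induction n rule: less_induct)
  case (less n)
  show ?case
  proof (cases "n = 1")
    case False
    then have "2 ^ length (lsb_bits (n div 2)) \<le> 2 * (n div 2)"
      using less by (intro less.IH) auto
    then show ?thesis
      using less.prems by (simp add: lsb_bits_pos[of n])
  qed simp
qed

section \<open>The reduction graph\<close>

definition interleave :: "bool list \<Rightarrow> bool list" where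
  "interleave bs = concat (map (\<lambda>b. [True, b]) bs)"

lemma interleave_simps [simp]:
  "interleave [] = []" "interleave (b # bs) = True # b # interleave bs"
  by (simp_all add: interleave_def)

lemma length_interleave [simp]: "length (interleave bs) = 2 * length bs"
  by (induction bs) auto

lemma interleave_append_eq:
  assumes "interleave a @ r = interleave b @ r'"
    and "\<nexists>c t. r = True # c # t" and "\<nexists>c t. r' = True # c # t"
  shows "a = b \<and> r = r'"
  using assms
proof (induction a arbitrary: b)
  case Nil
  then show ?case by (cases b) auto
next
  case (Cons x a)
  then show ?case by (cases b) auto
qed

text \<open>Node \<open>comp_node i\<close> stands for the \<open>i\<close>-th pair of \<open>Rs\<close>, node \<open>state_node i s p\<close> for
  state \<open>p\<close> of its left (\<open>s = False\<close>) or right (\<open>s = True\<close>) automaton.\<close>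

definition comp_bits :: "nat \<Rightarrow> bool list" where
  "comp_bits i = False # interleave (lsb_bits i) @ [True]"

definition state_bits :: "nat \<Rightarrow> bool \<Rightarrow> nat \<Rightarrow> bool list" where
  "state_bits i s p = False # interleave (lsb_bits i) @ False # s # lsb_bits p @ [True]"

definition comp_node :: "nat \<Rightarrow> nat" where
  "comp_node i = lsb_value (comp_bits i)"

definition state_node :: "nat \<Rightarrow> bool \<Rightarrow> nat \<Rightarrow> nat" where
  "state_node i s p = lsb_value (state_bits i s p)"

lemma lsb_bits_comp_node: "lsb_bits (comp_node i) = comp_bits i"
  unfolding comp_node_def by (rule lsb_bits_lsb_value) (auto simp: comp_bits_def)

lemma lsb_bits_state_node: "lsb_bits (state_node i s p) = state_bits i s p"
  unfolding state_node_def by (rule lsb_bits_lsb_value) (auto simp: state_bits_def)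

lemma comp_node_inj: "comp_node i = comp_node j \<Longrightarrow> i = j"
proof -
  assume "comp_node i = comp_node j"
  then have "interleave (lsb_bits i) @ [True] = interleave (lsb_bits j) @ [True]"
    using lsb_bits_comp_node[of i] lsb_bits_comp_node[of j] by (simp add: comp_bits_def)
  then show "i = j"
    using interleave_append_eq lsb_bits_inj by blast
qed

lemma state_node_inj: "state_node i s p = state_node j t q \<Longrightarrow> i = j \<and> s = t \<and> p = q"
proof -
  assume "state_node i s p = state_node j t q"
  then have "interleave (lsb_bits i) @ False # s # lsb_bits p @ [True]
      = interleave (lsb_bits j) @ False # t # lsb_bits q @ [True]"
    using lsb_bits_state_node[of i s p] lsb_bits_state_node[of j t q] by (simp add: state_bits_def)
  then show ?thesis
    using interleave_append_eq lsb_bits_inj by blast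
qed

lemma comp_node_neq_state_node: "comp_node i \<noteq> state_node j t q"
proof
  assume "comp_node i = state_node j t q"
  then have "interleave (lsb_bits i) @ [True] = interleave (lsb_bits j) @ False # t # lsb_bits q @ [True]"
    using lsb_bits_comp_node[of i] lsb_bits_state_node[of j t q]
    by (simp add: comp_bits_def state_bits_def)
  then show False
    using interleave_append_eq by blast
qed

lemma comp_node_less: "length (lsb_bits i) + 3 \<le> n \<Longrightarrow> comp_node i < 2 ^ (4 * n) - 1"
  unfolding comp_node_def by (rule lsb_value_less_mask) (simp add: comp_bits_def)

lemma state_node_less:
  "length (lsb_bits i) + 3 \<le> n \<Longrightarrow> length (lsb_bits p) \<le> n \<Longrightarrow> state_node i s p < 2 ^ (4 * n) - 1"
  unfolding state_node_def by (rule lsb_value_less_mask) (simp add: state_bits_def)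

definition side :: "'a \<times> 'a \<Rightarrow> bool \<Rightarrow> 'a" where
  "side c s = (if s then snd c else fst c)"

definition init_edge :: "nat \<Rightarrow> bool \<Rightarrow> nat \<Rightarrow> nat \<times> ('s + nat) \<times> nat" where
  "init_edge i s p = (comp_node i, Inr (if s then 1 else 0), state_node i s p)"

definition final_edge :: "nat \<Rightarrow> bool \<Rightarrow> nat \<Rightarrow> nat \<times> ('s + nat) \<times> nat" where
  "final_edge i s f = (state_node i s f, Inr (if s then 3 else 2), comp_node i)"

definition trans_edge :: "nat \<Rightarrow> bool \<Rightarrow> nat \<times> 's \<times> nat \<Rightarrow> nat \<times> ('s + nat) \<times> nat" where
  "trans_edge i s t = (case t of (p, a, q) \<Rightarrow> (state_node i s p, Inl a, state_node i s q))"

definition nfa_edges :: "nat \<Rightarrow> bool \<Rightarrow> 's nfa \<Rightarrow> (nat \<times> ('s + nat) \<times> nat) list" where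
  "nfa_edges i s X = map (init_edge i s) (initial X) @ map (final_edge i s) (final X)
     @ map (trans_edge i s) (trans X)"

definition comp_edges :: "nat \<Rightarrow> 's nfa \<times> 's nfa \<Rightarrow> (nat \<times> ('s + nat) \<times> nat) list" where
  "comp_edges i c = nfa_edges i False (fst c) @ nfa_edges i True (snd c)"

definition reduction_edges :: "('s nfa \<times> 's nfa) list \<Rightarrow> (nat \<times> ('s + nat) \<times> nat) list" where
  "reduction_edges Rs = concat (map (case_prod comp_edges) (enumerate 0 Rs))"

text \<open>Most of the \<open>2 ^ (4 * n) - 1\<close> nodes are isolated; the machine prints this bound in binary
  as \<open>4 * n\<close> ones while reading the input once.\<close>
definition reduction_graph :: "('s nfa \<times> 's nfa) list \<Rightarrow> ('s + nat) graph" where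
  "reduction_graph Rs = Graph (2 ^ (4 * length (enc_rec Rs)) - 1) (reduction_edges Rs)"

lemma mem_nfa_edges:
  "e \<in> set (nfa_edges i s X) \<longleftrightarrow> (\<exists>p\<in>set (initial X). e = init_edge i s p)
     \<or> (\<exists>f\<in>set (final X). e = final_edge i s f) \<or> (\<exists>t\<in>set (trans X). e = trans_edge i s t)"
  by (auto simp: nfa_edges_def)

lemma mem_reduction_edges:
  "e \<in> set (gedges (reduction_graph Rs)) \<longleftrightarrow>
     (\<exists>i < length Rs. \<exists>s. e \<in> set (nfa_edges i s (side (Rs ! i) s)))"
proof -
  have enum: "set (enumerate 0 Rs) = (\<lambda>i. (i, Rs ! i)) ` {..<length Rs}"
    by (auto simp: in_set_enumerate_eq)
  have "set (gedges (reduction_graph Rs)) = (\<Union>i<length Rs. set (comp_edges i (Rs ! i)))"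
    unfolding reduction_graph_def reduction_edges_def graph.sel set_concat set_map enum image_image
    by (simp only: prod.case)
  then show ?thesis
    by (auto simp: comp_edges_def side_def ex_bool_eq)
qed

definition enc_items :: "('x \<Rightarrow> 's tok list) \<Rightarrow> 'x list \<Rightarrow> 's tok list" where
  "enc_items f xs = concat (map (\<lambda>x. f x @ [TComma]) xs)"

lemma enc_list_eq: "enc_list f xs = TOpen # enc_items f xs @ [TClose]"
  by (simp add: enc_list_def enc_items_def)

lemma enc_items_simps [simp]:
  "enc_items f [] = []" "enc_items f (x # xs) = f x @ TComma # enc_items f xs"
  "enc_items f (xs @ ys) = enc_items f xs @ enc_items f ys"
  by (simp_all add: enc_items_def)

lemma length_le_concat_map: "x \<in> set xs \<Longrightarrow> length (f x) \<le> length (concat (map f xs))"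
  by (induction xs) auto

definition nfa_states :: "'s nfa \<Rightarrow> nat set" where
  "nfa_states X = set (initial X) \<union> set (final X) \<union> (\<Union>(q, a, q') \<in> set (trans X). {q, q'})"

lemma length_le_enc_list: "x \<in> set xs \<Longrightarrow> length (f x) \<le> length (enc_list f xs)"
  by (induction xs) (auto simp: enc_list_def)

lemma length_lsb_bits_le_enc_nfa:
  fixes X :: "'s nfa"
  assumes "p \<in> nfa_states X"
  shows "length (lsb_bits p) \<le> length (enc_nfa X)"
proof -
  let ?I = "enc_list enc_nat (initial X) :: 's tok list"
    and ?F = "enc_list enc_nat (final X) :: 's tok list" and ?T = "enc_list enc_tr (trans X)"
  have "length (enc_nat p :: 's tok list) \<le> length ?I + length ?F + length ?T"
    using assms unfolding nfa_states_def
  proof (elim UnE UN_E)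
    assume "p \<in> set (initial X)"
    then have "length (enc_nat p :: 's tok list) \<le> length ?I"
      by (rule length_le_enc_list)
    then show ?thesis by linarith
  next
    assume "p \<in> set (final X)"
    then have "length (enc_nat p :: 's tok list) \<le> length ?F"
      by (rule length_le_enc_list)
    then show ?thesis by linarith
  next
    fix t assume "t \<in> set (trans X)" and "p \<in> (case t of (q, a, q') \<Rightarrow> {q, q'})"
    then show ?thesis using length_le_enc_list[of t "trans X" enc_tr]
      by (auto simp: enc_tr_def)
  qed
  then show ?thesis
    by (simp add: enc_nfa_def enc_nat_eq_lsb_bits)
qed

definition comp_enc :: "'s nfa \<times> 's nfa \<Rightarrow> 's tok list" where
  "comp_enc c = enc_nfa (fst c) @ enc_nfa (snd c) @ [TComma]"

lemma enc_rec_eq: "enc_rec Rs = TOpen # concat (map comp_enc Rs) @ [TClose]"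
  by (simp add: enc_rec_def enc_list_def comp_enc_def[abs_def] case_prod_beta)

lemma length_enc_rec_ge: "length Rs + 2 \<le> length (enc_rec Rs)"
proof -
  have "length Rs \<le> length (concat (map comp_enc Rs))"
    by (induction Rs) (auto simp: comp_enc_def)
  then show ?thesis
    by (simp add: enc_rec_eq)
qed

lemma length_enc_nfa_side_le:
  assumes "i < length Rs"
  shows "length (enc_nfa (side (Rs ! i) s)) \<le> length (enc_rec Rs)"
proof -
  have "length (comp_enc (Rs ! i)) \<le> length (concat (map comp_enc Rs))"
    using length_le_concat_map[OF nth_mem[OF assms]] .
  then show ?thesis
    by (simp add: enc_rec_eq comp_enc_def side_def)
qed

lemma nfa_edges_nodes_less:
  assumes "(u, l, v) \<in> set (nfa_edges i s X)"
    and "length (lsb_bits i) + 3 \<le> n" and "length (enc_nfa X) \<le> n"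
  shows "u < 2 ^ (4 * n) - 1 \<and> v < 2 ^ (4 * n) - 1"
proof -
  have "state_node i s p < 2 ^ (4 * n) - 1" if "p \<in> nfa_states X" for p
    using state_node_less[OF assms(2)] length_lsb_bits_le_enc_nfa[OF that] assms(3) by simp
  moreover have "comp_node i < 2 ^ (4 * n) - 1"
    using comp_node_less[OF assms(2)] .
  ultimately show ?thesis
    using assms(1) unfolding mem_nfa_edges
    by (elim disjE bexE) (auto simp: init_edge_def final_edge_def trans_edge_def nfa_states_def)
qed

lemma reduction_graph_wf: "graph_wf (reduction_graph Rs)"
  unfolding graph_wf_def
proof (clarify)
  fix u l v
  assume "(u, l, v) \<in> set (gedges (reduction_graph Rs))"
  then obtain i s where i: "i < length Rs" and e: "(u, l, v) \<in> set (nfa_edges i s (side (Rs ! i) s))"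
    by (auto simp: mem_reduction_edges)
  have "length (lsb_bits i) + 3 \<le> length (enc_rec Rs)"
    using length_lsb_bits_le[of i] length_enc_rec_ge[of Rs] i by linarith
  then show "u < gn (reduction_graph Rs) \<and> v < gn (reduction_graph Rs)"
    using nfa_edges_nodes_less[OF e _ length_enc_nfa_side_le[OF i]]
    by (simp add: reduction_graph_def)
qed

section \<open>The query\<close>

definition letter_nfa :: "nat \<Rightarrow> ('s + nat) nfa" where
  "letter_nfa k = NFA [0] [1] [(0, Inr k, 1)]"

definition sigma_star_nfa :: "('s::finite + nat) nfa" where
  "sigma_star_nfa = NFA [0] [0] (map (\<lambda>a. (0, Inl a, 0)) (SOME as. set as = UNIV))"

text \<open>Variable 2 is a node \<open>comp_node i\<close>; the paths 3\<open>\<rightarrow>\<close>4 and 5\<open>\<rightarrow>\<close>6 are accepting runs of the left and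
  right automaton of the \<open>i\<close>-th pair, entered and left through the fresh-labelled edges.\<close>
definition reduction_query :: "('s::finite + nat) crpq" where
  "reduction_query = CRPQ
     [(2, letter_nfa 0, 3), (3, sigma_star_nfa, 4), (4, letter_nfa 2, 2),
      (2, letter_nfa 1, 5), (5, sigma_star_nfa, 6), (6, letter_nfa 3, 2)] [(1, 4)]"

lemma reduction_query_wf: "crpq_wf reduction_query"
  by (simp add: crpq_wf_def reduction_query_def)

lemma nlang_letter_nfa: "w \<in> nlang (letter_nfa k) \<longleftrightarrow> w = [Inr k]"
proof
  assume "w \<in> nlang (letter_nfa k)"
  then have "nrun (letter_nfa k) 0 w 1"
    by (simp add: nlang_def letter_nfa_def)
  then show "w = [Inr k]"
  proof cases
    case (nrun_cons a r w')
    then have "a = Inr k" "r = 1"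
      by (auto simp: letter_nfa_def)
    with nrun_cons(3) have "w' = []"
      by cases (auto simp: letter_nfa_def)
    with nrun_cons \<open>a = Inr k\<close> show ?thesis
      by simp
  qed simp
next
  assume "w = [Inr k]"
  moreover have "nrun (letter_nfa k) 0 [Inr k] 1"
    by (rule nrun_cons[OF _ nrun_nil]) (simp add: letter_nfa_def)
  ultimately show "w \<in> nlang (letter_nfa k)"
    by (simp add: nlang_def letter_nfa_def)
qed

lemma map_Inl_in_sigma_star:
  fixes u :: "'s::finite list"
  shows "map Inl u \<in> nlang sigma_star_nfa"
proof -
  have "set (SOME as. set as = (UNIV :: 's set)) = UNIV"
    by (rule someI_ex) (use finite_list[OF finite_UNIV] in blast)
  then have loop: "(0, Inl a, 0) \<in> set (trans (sigma_star_nfa :: ('s + nat) nfa))" for a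
    by (simp add: sigma_star_nfa_def)
  have "nrun (sigma_star_nfa :: ('s + nat) nfa) 0 (map Inl u) 0"
    by (induction u) (simp_all add: nrun_nil nrun_cons[OF loop])
  then show ?thesis
    by (simp add: nlang_def sigma_star_nfa_def)
qed

lemma gpath_single: "gpath G u [a] v \<longleftrightarrow> (u, a, v) \<in> set (gedges G) \<and> v < gn G"
proof
  assume "gpath G u [a] v"
  then show "(u, a, v) \<in> set (gedges G) \<and> v < gn G"
  proof cases
    case (gpath_cons w)
    from gpath_cons(2) show ?thesis
      by cases (use gpath_cons(1) in auto)
  qed
qed (auto intro: gpath_cons gpath_nil)

lemma gpath_edge: "graph_wf G \<Longrightarrow> (u, a, v) \<in> set (gedges G) \<Longrightarrow> gpath G u [a] v"
  by (auto simp: gpath_single graph_wf_def)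

lemma reduction_edge_Inl:
  assumes "(state_node i s p, Inl b, v) \<in> set (gedges (reduction_graph Rs))"
  shows "\<exists>q. v = state_node i s q \<and> (p, b, q) \<in> set (trans (side (Rs ! i) s))"
proof -
  from assms obtain j t where "(state_node i s p, Inl b, v) \<in> set (nfa_edges j t (side (Rs ! j) t))"
    by (auto simp: mem_reduction_edges)
  then obtain p' q where "(p', b, q) \<in> set (trans (side (Rs ! j) t))"
    and "state_node i s p = state_node j t p'" and "v = state_node j t q"
    by (auto simp: mem_nfa_edges init_edge_def final_edge_def trans_edge_def split: prod.splits)
  then show ?thesis
    by (auto dest: state_node_inj)
qed

lemma reduction_edge_Inr:
  assumes "(u, Inr k, v) \<in> set (gedges (reduction_graph Rs))"
  shows "\<exists>i < length Rs. \<exists>s.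
    (\<exists>p \<in> set (initial (side (Rs ! i) s)). u = comp_node i \<and> v = state_node i s p \<and> k = (if s then 1 else 0))
    \<or> (\<exists>f \<in> set (final (side (Rs ! i) s)). u = state_node i s f \<and> v = comp_node i \<and> k = (if s then 3 else 2))"
proof -
  from assms obtain i s where i: "i < length Rs" and e: "(u, Inr k, v) \<in> set (nfa_edges i s (side (Rs ! i) s))"
    by (auto simp: mem_reduction_edges)
  from e have "(\<exists>p \<in> set (initial (side (Rs ! i) s)). u = comp_node i \<and> v = state_node i s p \<and> k = (if s then 1 else 0))
    \<or> (\<exists>f \<in> set (final (side (Rs ! i) s)). u = state_node i s f \<and> v = comp_node i \<and> k = (if s then 3 else 2))"
    unfolding mem_nfa_edges
    by (elim disjE bexE) (auto simp: init_edge_def final_edge_def trans_edge_def split: prod.splits)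
  with i show ?thesis
    by blast
qed

lemma gpath_state_node_nrun:
  "gpath (reduction_graph Rs) (state_node i s p) (map Inl u) v \<Longrightarrow>
     \<exists>q. v = state_node i s q \<and> nrun (side (Rs ! i) s) p u q"
proof (induction u arbitrary: p)
  case Nil
  then show ?case
    by (auto elim: gpath.cases intro: nrun_nil)
next
  case (Cons b u)
  then obtain w where edge: "(state_node i s p, Inl b, w) \<in> set (gedges (reduction_graph Rs))"
    and path: "gpath (reduction_graph Rs) w (map Inl u) v"
    by (auto elim: gpath.cases)
  obtain r where w: "w = state_node i s r" and step: "(p, b, r) \<in> set (trans (side (Rs ! i) s))"
    using reduction_edge_Inl[OF edge] by blast
  from Cons.IH[OF path[unfolded w]] obtain q where "v = state_node i s q" "nrun (side (Rs ! i) s) r u q"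
    by blast
  with step show ?case
    by (blast intro: nrun_cons)
qed

lemma nrun_gpath_state_node:
  "nrun (side (Rs ! i) s) p u q \<Longrightarrow> i < length Rs \<Longrightarrow> state_node i s q < gn (reduction_graph Rs) \<Longrightarrow>
     gpath (reduction_graph Rs) (state_node i s p) (map Inl u) (state_node i s q)"
proof (induction rule: nrun.induct)
  case (nrun_cons p a r w q)
  then have "trans_edge i s (p, a, r) \<in> set (gedges (reduction_graph Rs))"
    by (auto simp: mem_reduction_edges mem_nfa_edges)
  with nrun_cons show ?case
    by (auto simp: trans_edge_def intro: gpath_cons)
qed (auto intro: gpath_nil)

lemma detour_sound:
  assumes "(c, Inr (if s then 1 else 0), x) \<in> set (gedges (reduction_graph Rs))"
    and "gpath (reduction_graph Rs) x (map Inl u) y"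
    and "(y, Inr (if s then 3 else 2), c) \<in> set (gedges (reduction_graph Rs))"
  shows "\<exists>i < length Rs. c = comp_node i \<and> u \<in> nlang (side (Rs ! i) s)"
proof -
  from reduction_edge_Inr[OF assms(1)] obtain i p where i: "i < length Rs" and c: "c = comp_node i"
    and p: "p \<in> set (initial (side (Rs ! i) s))" and x: "x = state_node i s p"
    by (auto simp: comp_node_neq_state_node split: if_splits)
  from gpath_state_node_nrun[OF assms(2)[unfolded x]] obtain q where y: "y = state_node i s q"
    and run: "nrun (side (Rs ! i) s) p u q"
    by blast
  from reduction_edge_Inr[OF assms(3)[unfolded y c]] have "q \<in> set (final (side (Rs ! i) s))"
    by (auto simp: comp_node_neq_state_node[symmetric] dest!: state_node_inj split: if_splits)
  with i c p run show ?thesis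
    by (auto simp: nlang_def)
qed

lemma detour_complete:
  assumes "i < length Rs" and "u \<in> nlang (side (Rs ! i) s)"
  shows "\<exists>x y. (comp_node i, Inr (if s then 1 else 0), x) \<in> set (gedges (reduction_graph Rs))
    \<and> gpath (reduction_graph Rs) x (map Inl u) y
    \<and> (y, Inr (if s then 3 else 2), comp_node i) \<in> set (gedges (reduction_graph Rs))"
proof -
  from assms(2) obtain p f where p: "p \<in> set (initial (side (Rs ! i) s))"
    and f: "f \<in> set (final (side (Rs ! i) s))" and run: "nrun (side (Rs ! i) s) p u f"
    by (auto simp: nlang_def)
  have "init_edge i s p \<in> set (gedges (reduction_graph Rs))"
    and fin: "final_edge i s f \<in> set (gedges (reduction_graph Rs))"
    unfolding mem_reduction_edges mem_nfa_edges using assms(1) p f by blast+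
  moreover have "state_node i s f < gn (reduction_graph Rs)"
    using fin reduction_graph_wf[of Rs] by (auto simp: graph_wf_def final_edge_def)
  ultimately show ?thesis
    using nrun_gpath_state_node[OF run assms(1)] unfolding init_edge_def final_edge_def by blast
qed

lemma crpq_holdsE:
  assumes "crpq_holds S G Q a a'"
  obtains \<nu> ws where "\<forall>k < length (atoms Q). case atoms Q ! k of (x, X, y) \<Rightarrow>
      gpath G (\<nu> x) (ws ! k) (\<nu> y) \<and> ws ! k \<in> nlang X"
    and "\<forall>(i, j) \<in> set (pairs Q). (ws ! i, ws ! j) \<in> S"
  using assms unfolding crpq_holds_def by blast

lemma reduction_query_sound:
  fixes Rs :: "('s::finite nfa \<times> 's nfa) list"
  assumes "crpq_holds (liftS S) (reduction_graph Rs) reduction_query a a'"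
  shows "rec_rel Rs \<inter> S \<noteq> {}"
proof -
  let ?G = "reduction_graph Rs" and ?Q = "reduction_query :: ('s + nat) crpq"
  obtain \<nu> ws where
    atoms: "\<forall>k < length (atoms ?Q). case atoms ?Q ! k of (x, X, y) \<Rightarrow>
      gpath ?G (\<nu> x) (ws ! k) (\<nu> y) \<and> ws ! k \<in> nlang X"
    and pairs: "\<forall>(i, j) \<in> set (pairs ?Q). (ws ! i, ws ! j) \<in> liftS S"
    by (rule crpq_holdsE[OF assms])
  have atom: "case atoms ?Q ! k of (x, X, y) \<Rightarrow>
      gpath ?G (\<nu> x) (ws ! k) (\<nu> y) \<and> ws ! k \<in> nlang X" if "k < 6" for k
    using atoms that by (simp add: reduction_query_def)
  have pair: "(ws ! 1, ws ! 4) \<in> liftS S"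
    using pairs by (simp add: reduction_query_def)
  from pair obtain u w where u: "ws ! 1 = map Inl u" and w: "ws ! 4 = map Inl w" and uw: "(u, w) \<in> S"
    by (auto simp: liftS_def)
  have "\<exists>i < length Rs. \<nu> 2 = comp_node i \<and> u \<in> nlang (side (Rs ! i) False)"
    by (rule detour_sound[where x = "\<nu> 3" and y = "\<nu> 4"])
      (use atom[of 0] atom[of 1] atom[of 2] u in \<open>auto simp: reduction_query_def nlang_letter_nfa gpath_single\<close>)
  then obtain i where i: "i < length Rs" "\<nu> 2 = comp_node i" and "u \<in> nlang (fst (Rs ! i))"
    by (auto simp: side_def)
  have "\<exists>j < length Rs. \<nu> 2 = comp_node j \<and> w \<in> nlang (side (Rs ! j) True)"
    by (rule detour_sound[where x = "\<nu> 5" and y = "\<nu> 6"])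
      (use atom[of 3] atom[of 4] atom[of 5] w in \<open>auto simp: reduction_query_def nlang_letter_nfa gpath_single\<close>)
  then have "w \<in> nlang (snd (Rs ! i))"
    using i by (auto simp: side_def dest: comp_node_inj)
  with i have "(u, w) \<in> rec_rel Rs"
    using \<open>u \<in> nlang (fst (Rs ! i))\<close> nth_mem[of i Rs] by (force simp: rec_rel_def)
  with uw show ?thesis
    by blast
qed

lemma reduction_query_complete:
  fixes Rs :: "('s::finite nfa \<times> 's nfa) list"
  assumes "rec_rel Rs \<inter> S \<noteq> {}"
  shows "crpq_holds (liftS S) (reduction_graph Rs) reduction_query 0 0"
proof -
  let ?G = "reduction_graph Rs" and ?Q = "reduction_query :: ('s + nat) crpq"
  from assms obtain u w c where "(u, w) \<in> S" and c: "c \<in> set Rs"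
    and "u \<in> nlang (fst c)" "w \<in> nlang (snd c)"
    by (auto simp: rec_rel_def)
  then obtain i where i: "i < length Rs" and uw: "(u, w) \<in> S"
    and "u \<in> nlang (side (Rs ! i) False)" "w \<in> nlang (side (Rs ! i) True)"
    by (metis in_set_conv_nth side_def)
  then obtain x y x' y' where
    left: "(comp_node i, Inr 0, x) \<in> set (gedges ?G)" "gpath ?G x (map Inl u) y"
      "(y, Inr 2, comp_node i) \<in> set (gedges ?G)" and
    right: "(comp_node i, Inr 1, x') \<in> set (gedges ?G)" "gpath ?G x' (map Inl w) y'"
      "(y', Inr 3, comp_node i) \<in> set (gedges ?G)"
    using detour_complete[OF i, of u False] detour_complete[OF i, of w True] by auto
  define \<nu> where "\<nu> = (\<lambda>n::nat. if n = 2 then comp_node i else if n = 3 then x else if n = 4 then y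
    else if n = 5 then x' else if n = 6 then y' else 0)"
  define ws where "ws = [[Inr 0], map Inl u, [Inr 2], [Inr 1], map Inl w, [Inr 3 :: 's + nat]]"
  have "\<forall>k < length (atoms reduction_query). case atoms reduction_query ! k of (x, X, y) \<Rightarrow>
      gpath ?G (\<nu> x) (ws ! k) (\<nu> y) \<and> ws ! k \<in> nlang X"
    using left right reduction_graph_wf[of Rs]
    by (simp add: reduction_query_def All_less_Suc numeral_eq_Suc \<nu>_def ws_def nlang_letter_nfa
        map_Inl_in_sigma_star gpath_edge)
  moreover have "\<forall>(i, j) \<in> set (pairs reduction_query). (ws ! i, ws ! j) \<in> liftS S"
    using uw by (auto simp: reduction_query_def ws_def liftS_def)
  ultimately show ?thesis
    unfolding crpq_holds_def
    by (intro exI[of _ \<nu>] conjI exI[of _ ws]) (simp_all add: \<nu>_def ws_def reduction_query_def)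
qed

section \<open>A log-space transducer computing the reduction\<close>

text \<open>The transducer first prints the number of nodes, four ones per input token, rewinds, and then
  prints one edge for every item of the lists \<open>initial\<close>, \<open>final\<close>, \<open>trans\<close> of every automaton,
  keeping the index \<open>i\<close> of the current pair as a binary counter on its work tape. The edge is
  printed by a straight-line program \<open>prog\<close>: \<open>Inter\<close> prints the counter interleaved with marker
  bits, \<open>Copy\<close> copies the binary digits of a state from the input, \<open>Skip\<close> passes a separator and
  \<open>Sym\<close> copies a letter.\<close>

datatype 's instr = Emit "'s tok" | Inter | Copy | Skip | Sym

datatype part = Initials bool | Finals bool | Transitions bool

datatype st = Init | Halt | Count nat | Rewind nat | CompStart | NfaStart bool | NfaOpen bool
  | Loop part | Next part | CompEnd | Inc | IncBack | Finish nat
  | Run part nat | InterFwd part nat | InterBit part nat | InterBack part nat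

definition comp_node_prog :: "'s instr list" where
  "comp_node_prog = [Emit (TBit False), Inter, Emit (TBit True)]"

definition state_node_prog :: "bool \<Rightarrow> 's instr list" where
  "state_node_prog s = [Emit (TBit False), Inter, Emit (TBit False), Emit (TBit s), Copy, Emit (TBit True)]"

fun prog :: "part \<Rightarrow> 's instr list" where
  "prog (Initials s) = comp_node_prog
     @ map Emit (TComma # enc_lab (Inr (if s then 1 else 0) :: 's + nat) @ [TComma])
     @ state_node_prog s @ [Emit TComma, Skip]"
| "prog (Finals s) = state_node_prog s
     @ map Emit (TComma # enc_lab (Inr (if s then 3 else 2) :: 's + nat) @ [TComma])
     @ comp_node_prog @ [Emit TComma, Skip]"
| "prog (Transitions s) = state_node_prog s @ [Emit TComma, Skip, Sym, Emit TComma, Skip]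
     @ state_node_prog s @ [Emit TComma, Skip]"

text \<open>The length of \<open>prog p\<close> does not depend on the letter type, which the control states do not
  mention.\<close>
definition prog_len :: "part \<Rightarrow> nat" where
  "prog_len p = length (prog p :: unit instr list)"

lemma length_prog [simp]: "length (prog p) = prog_len p"
  by (cases p) (simp_all add: prog_len_def comp_node_prog_def state_node_prog_def enc_nat_eq_lsb_bits)

fun is_bit :: "'s tok \<Rightarrow> bool" where
  "is_bit (TBit _) = True"
| "is_bit _ = False"

text \<open>The effect of an instruction on the output and on the unread part of the input.\<close>
fun instr_sem :: "bool list \<Rightarrow> 's instr \<Rightarrow> 's tok list \<Rightarrow> 's tok list \<times> 's tok list" where
  "instr_sem bs (Emit t) r = ([t], r)"
| "instr_sem bs Inter r = (map TBit (interleave bs), r)"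
| "instr_sem bs Copy r = (takeWhile is_bit r, dropWhile is_bit r)"
| "instr_sem bs Skip r = ([], tl r)"
| "instr_sem bs Sym r = (case r of TSym a # r' \<Rightarrow> ([TSym a], r') | _ \<Rightarrow> ([], tl r))"

fun prog_sem :: "bool list \<Rightarrow> 's instr list \<Rightarrow> 's tok list \<Rightarrow> 's tok list \<times> 's tok list" where
  "prog_sem bs [] r = ([], r)"
| "prog_sem bs (i # is) r = (case instr_sem bs i r of (v, r') \<Rightarrow>
     case prog_sem bs is r' of (v', r'') \<Rightarrow> (v @ v', r''))"

lemma prog_sem_append:
  "prog_sem bs (is @ js) r = (case prog_sem bs is r of (v, r') \<Rightarrow>
     case prog_sem bs js r' of (v', r'') \<Rightarrow> (v @ v', r''))"
  by (induction "is" arbitrary: r) (auto split: prod.split)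

lemma prog_sem_map_Emit [simp]: "prog_sem bs (map Emit ts) r = (ts, r)"
  by (induction ts) auto

lemma takeWhile_is_bit [simp]: "takeWhile is_bit (map TBit bs @ r) = map TBit bs @ takeWhile is_bit r"
  by (induction bs) auto

lemma dropWhile_is_bit [simp]: "dropWhile is_bit (map TBit bs @ r) = dropWhile is_bit r"
  by (induction bs) auto

lemma prog_sem_comp_node_prog:
  "prog_sem (lsb_bits i) comp_node_prog r = (enc_nat (comp_node i), r)"
  by (simp add: comp_node_prog_def enc_nat_eq_lsb_bits lsb_bits_comp_node comp_bits_def)

lemma prog_sem_state_node_prog:
  "prog_sem (lsb_bits i) (state_node_prog s) (enc_nat p @ TComma # r) = (enc_nat (state_node i s p), TComma # r)"
  by (simp add: state_node_prog_def enc_nat_eq_lsb_bits lsb_bits_state_node state_bits_def)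

lemma prog_sem_Initials:
  "prog_sem (lsb_bits i) (prog (Initials s)) (enc_nat p @ TComma # r) = (enc_edge (init_edge i s p) @ [TComma], r)"
  by (simp add: prog_sem_append prog_sem_comp_node_prog prog_sem_state_node_prog enc_edge_def init_edge_def)

lemma prog_sem_Finals:
  "prog_sem (lsb_bits i) (prog (Finals s)) (enc_nat f @ TComma # r) = (enc_edge (final_edge i s f) @ [TComma], r)"
  by (simp add: prog_sem_append prog_sem_comp_node_prog prog_sem_state_node_prog enc_edge_def final_edge_def)

lemma prog_sem_Transitions:
  "prog_sem (lsb_bits i) (prog (Transitions s)) (enc_tr t @ TComma # r) = (enc_edge (trans_edge i s t) @ [TComma], r)"
  by (cases t) (simp add: prog_sem_append prog_sem_state_node_prog enc_edge_def trans_edge_def enc_tr_def)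

fun next_part :: "part \<Rightarrow> st" where
  "next_part (Initials s) = Loop (Finals s)"
| "next_part (Finals s) = Loop (Transitions s)"
| "next_part (Transitions s) = (if s then CompEnd else NfaStart True)"

text \<open>Work-tape symbols: \<open>0\<close> blank, \<open>1\<close> and \<open>2\<close> the binary digits of the counter, \<open>3\<close> the left end.
  Since the input head cannot detect the left end of the input, \<open>Rewind\<close> moves left until it has
  read \<open>TOpen\<close> four times in a row, which happens only at position \<open>0\<close>.\<close>
fun delta :: "st \<Rightarrow> 's tok option \<Rightarrow> nat \<Rightarrow> st \<times> dir \<times> nat \<times> dir \<times> 's tok option" where
  "delta Init a w = (Count 0, Stay, w, Stay, Some TOpen)"
| "delta (Count k) a w = (case a of
      None \<Rightarrow> (Rewind 0, Lft, w, Stay, Some TComma)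
    | Some _ \<Rightarrow> if k < 3 then (Count (Suc k), Stay, w, Stay, Some (TBit True))
                else (Count 0, Rgt, w, Stay, Some (TBit True)))"
| "delta (Rewind k) a w = (if a = Some TOpen then
      (if k < 3 then (Rewind (Suc k), Lft, w, Stay, None) else (CompStart, Rgt, 3, Stay, Some TOpen))
    else (Rewind 0, Lft, w, Stay, None))"
| "delta CompStart a w = (if a = Some TClose then (Finish 0, Stay, w, Stay, Some TClose)
    else (NfaStart False, Stay, w, Stay, None))"
| "delta (NfaStart s) a w = (NfaOpen s, Rgt, w, Stay, None)"
| "delta (NfaOpen s) a w = (Loop (Initials s), Rgt, w, Stay, None)"
| "delta (Loop p) a w = (if a = Some TClose then (Next p, Rgt, w, Stay, None)
    else (Run p 0, Stay, w, Stay, None))"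
| "delta (Next p) a w = (next_part p, Rgt, w, Stay, None)"
| "delta CompEnd a w = (Inc, Rgt, w, Rgt, None)"
| "delta Inc a w = (if w = 2 then (Inc, Stay, 1, Rgt, None) else (IncBack, Stay, 2, Lft, None))"
| "delta IncBack a w = (if w = 3 then (CompStart, Stay, w, Stay, None) else (IncBack, Stay, w, Lft, None))"
| "delta (Finish k) a w = (if k < 2 then (Finish (Suc k), Stay, w, Stay, Some TComma)
    else (Halt, Stay, w, Stay, Some TClose))"
| "delta Halt a w = (Halt, Stay, w, Stay, None)"
| "delta (Run p pc) a w = (if pc < prog_len p then (case prog p ! pc of
      Emit t \<Rightarrow> (Run p (Suc pc), Stay, w, Stay, Some t)
    | Inter \<Rightarrow> (InterFwd p pc, Stay, w, Rgt, None)
    | Copy \<Rightarrow> (case a of Some (TBit b) \<Rightarrow> (Run p pc, Rgt, w, Stay, Some (TBit b))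
                | _ \<Rightarrow> (Run p (Suc pc), Stay, w, Stay, None))
    | Skip \<Rightarrow> (Run p (Suc pc), Rgt, w, Stay, None)
    | Sym \<Rightarrow> (case a of Some (TSym c) \<Rightarrow> (Run p (Suc pc), Rgt, w, Stay, Some (TSym c))
                | _ \<Rightarrow> (Run p (Suc pc), Rgt, w, Stay, None)))
    else (Loop p, Stay, w, Stay, None))"
| "delta (InterFwd p pc) a w = (if w = 1 \<or> w = 2 then (InterBit p pc, Stay, w, Stay, Some (TBit True))
    else (InterBack p pc, Stay, w, Lft, None))"
| "delta (InterBit p pc) a w = (InterFwd p pc, Stay, w, Rgt, Some (TBit (w = 2)))"
| "delta (InterBack p pc) a w = (if w = 3 then (Run p (Suc pc), Stay, w, Stay, None)
    else (InterBack p pc, Stay, w, Lft, None))"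

fun valid :: "st \<Rightarrow> bool" where
  "valid (Count k) = (k < 4)"
| "valid (Rewind k) = (k < 4)"
| "valid (Finish k) = (k < 3)"
| "valid (Run p pc) = (pc \<le> prog_len p)"
| "valid (InterFwd p pc) = (pc < prog_len p)"
| "valid (InterBit p pc) = (pc < prog_len p)"
| "valid (InterBack p pc) = (pc < prog_len p)"
| "valid _ = True"

lemma valid_next_part [simp]: "valid (next_part p)"
  by (cases p) auto

lemma valid_delta: "valid s \<Longrightarrow> valid (fst (delta s a w))"
  by (cases s) (auto split: instr.split option.split tok.split)

lemma delta_work_symbol: "w < 4 \<Longrightarrow> fst (snd (snd (delta s a w))) < 4"
  by (cases s) (auto split: instr.split option.split tok.split)

definition part_states :: "part \<Rightarrow> st list" where
  "part_states p = [Loop p, Next p] @ map (Run p) [0..<Suc (prog_len p)]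
     @ map (InterFwd p) [0..<prog_len p] @ map (InterBit p) [0..<prog_len p]
     @ map (InterBack p) [0..<prog_len p]"

definition all_parts :: "part list" where
  "all_parts = [Initials False, Initials True, Finals False, Finals True,
     Transitions False, Transitions True]"

definition all_states :: "st list" where
  "all_states = [Init, Halt, CompStart, CompEnd, Inc, IncBack, NfaStart False, NfaStart True,
      NfaOpen False, NfaOpen True] @ map Count [0..<4] @ map Rewind [0..<4] @ map Finish [0..<3]
    @ concat (map part_states all_parts)"

lemma set_all_parts: "set all_parts = UNIV"
proof -
  have "p \<in> set all_parts" for p
    by (cases p) (simp_all add: all_parts_def)
  then show ?thesis
    by blast
qed

lemma mem_part_states: "s \<in> set (part_states p) \<longleftrightarrow> s = Loop p \<or> s = Next p
    \<or> (\<exists>pc \<le> prog_len p. s = Run p pc)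
    \<or> (\<exists>pc < prog_len p. s = InterFwd p pc \<or> s = InterBit p pc \<or> s = InterBack p pc)"
  by (auto simp: part_states_def)

lemma set_all_states: "s \<in> set all_states \<longleftrightarrow> valid s"
proof -
  have "s \<in> set all_states \<longleftrightarrow> s \<in> {Init, Halt, CompStart, CompEnd, Inc, IncBack, NfaStart False,
      NfaStart True, NfaOpen False, NfaOpen True} \<or> s \<in> Count ` {..<4} \<or> s \<in> Rewind ` {..<4}
      \<or> s \<in> Finish ` {..<3} \<or> (\<exists>p. s \<in> set (part_states p))"
    by (simp add: all_states_def set_all_parts atLeast0LessThan)
  then show ?thesis
    by (cases s) (auto simp: mem_part_states)
qed

definition st_num :: "st \<Rightarrow> nat" where
  "st_num s = (LEAST n. all_states ! n = s)"

lemma st_num: "valid s \<Longrightarrow> st_num s < length all_states \<and> all_states ! st_num s = s"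
proof -
  assume "valid s"
  then obtain n where "n < length all_states" "all_states ! n = s"
    using set_all_states by (metis in_set_conv_nth)
  then show ?thesis
    unfolding st_num_def by (metis (mono_tags, lifting) LeastI Least_le le_less_trans)
qed

lemma st_num_Init: "st_num Init = 0"
  unfolding st_num_def by (rule Least_eq_0) (simp add: all_states_def)

lemma st_num_Halt: "st_num Halt = 1"
  unfolding st_num_def
proof (rule Least_equality)
  show "all_states ! 1 = Halt"
    by (simp add: all_states_def)
  show "1 \<le> n" if "all_states ! n = Halt" for n
    using that by (cases n) (simp_all add: all_states_def)
qed

definition num_delta :: "nat \<Rightarrow> 's tok option \<Rightarrow> nat \<Rightarrow> nat \<times> dir \<times> nat \<times> dir \<times> 's tok option" where
  "num_delta q a w = (if q < length all_states then
     (case delta (all_states ! q) a w of (s', d, w', d', b) \<Rightarrow> (st_num s', d, w', d', b))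
   else (0, Stay, 0, Stay, None))"

definition transducer :: "('s tok, 's tok) ltm" where
  "transducer = LTM (length all_states) 4 num_delta"

lemma transducer_wf: "tm_wf (transducer :: ('s tok, 's tok) ltm)"
proof -
  have step: "case num_delta q a w of (q', _, s, _, _) \<Rightarrow> q' < length all_states \<and> s < 4"
    if q: "q < length all_states" and w: "w < 4" for q w and a :: "'s tok option"
  proof -
    obtain s' d w' d' b where d: "delta (all_states ! q) a w = (s', d, w', d', b)"
      by (cases "delta (all_states ! q) a w") auto
    have "valid (all_states ! q)"
      using q set_all_states nth_mem by blast
    then have "valid s'"
      using valid_delta[of "all_states ! q" a w] d by simp
    moreover have "w' < 4"
      using delta_work_symbol[OF w, of "all_states ! q" a] d by simp
    ultimately show ?thesis
      using st_num[of s'] q d by (simp add: num_delta_def)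
  qed
  have "2 \<le> length all_states"
    by (simp add: all_states_def)
  then show ?thesis
    unfolding tm_wf_def transducer_def ltm.sel by (intro conjI allI impI step) simp_all
qed

section \<open>Runs of the transducer\<close>

type_synonym 's aconfig = "st \<times> nat \<times> (nat \<Rightarrow> nat) \<times> nat \<times> 's tok list"

definition read :: "'s tok list \<Rightarrow> nat \<Rightarrow> 's tok option" where
  "read x ih = (if ih < length x then Some (x ! ih) else None)"

definition astep :: "'s tok list \<Rightarrow> 's aconfig \<Rightarrow> 's aconfig" where
  "astep x c = (case c of (s, ih, wk, wh, out) \<Rightarrow>
     if s = Halt then c else
     (case delta s (read x ih) (wk wh) of (s', di, w', dw, ob) \<Rightarrow>
       (s', min (move di ih) (length x), wk(wh := w'), move dw wh,
        out @ (case ob of None \<Rightarrow> [] | Some b \<Rightarrow> [b]))))"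

definition encode_config :: "'s aconfig \<Rightarrow> 's tok config" where
  "encode_config c = (case c of (s, r) \<Rightarrow> (st_num s, r))"

lemma tm_step_encode_config:
  assumes "valid s"
  shows "tm_step transducer x (encode_config (s, r)) = encode_config (astep x (s, r))"
proof -
  have s: "st_num s < length all_states" "all_states ! st_num s = s"
    using st_num[OF assms] by auto
  have "all_states ! 1 = Halt"
    by (simp add: all_states_def)
  then have halt: "st_num s = 1 \<longleftrightarrow> s = Halt"
    using s(2) st_num_Halt by metis
  obtain ih wk wh out where r: "r = (ih, wk, wh, out)"
    by (cases r)
  show ?thesis
    using s halt by (simp add: r tm_step_def encode_config_def astep_def transducer_def
        num_delta_def read_def split: prod.split)
qed

lemma valid_astep: "valid (fst c) \<Longrightarrow> valid (fst (astep x c))"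
proof -
  assume v: "valid (fst c)"
  obtain s ih wk wh out where c: "c = (s, ih, wk, wh, out)"
    by (cases c)
  obtain s' di w' dw ob where "delta s (read x ih) (wk wh) = (s', di, w', dw, ob)"
    by (cases "delta s (read x ih) (wk wh)")
  then show ?thesis
    using v valid_delta[of s "read x ih" "wk wh"] by (simp add: c astep_def)
qed

definition astart :: "'s aconfig" where
  "astart = (Init, 0, \<lambda>_. 0, 0, [])"

lemma tm_conf_eq:
  "tm_conf transducer x t = encode_config ((astep x ^^ t) astart) \<and> valid (fst ((astep x ^^ t) astart))"
proof (induction t)
  case 0
  then show ?case
    by (simp add: tm_conf_def tm_init_def encode_config_def astart_def st_num_Init)
next
  case (Suc t)
  obtain s r where c: "(astep x ^^ t) astart = (s, r)"
    by (cases "(astep x ^^ t) astart")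
  have "valid (fst (astep x (s, r)))"
    using Suc c valid_astep by (metis fst_conv)
  with Suc c tm_step_encode_config[of s x r] show ?case
    by (simp add: tm_conf_def)
qed

inductive reaches :: "'s tok list \<Rightarrow> nat \<Rightarrow> 's aconfig \<Rightarrow> 's aconfig \<Rightarrow> bool" for x B where
  reaches_refl: "fst (snd (snd (snd c))) \<le> B \<Longrightarrow> reaches x B c c"
| reaches_step: "fst (snd (snd (snd c))) \<le> B \<Longrightarrow> reaches x B (astep x c) c' \<Longrightarrow> reaches x B c c'"

lemma reaches_stepI:
  "wh \<le> B \<Longrightarrow> reaches x B (astep x (s, ih, wk, wh, out)) c' \<Longrightarrow> reaches x B (s, ih, wk, wh, out) c'"
  by (rule reaches_step) auto

lemma reaches_funpow:
  "reaches x B c c' \<Longrightarrow> \<exists>k. (astep x ^^ k) c = c' \<and> (\<forall>j \<le> k. fst (snd (snd (snd ((astep x ^^ j) c)))) \<le> B)"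
proof (induction rule: reaches.induct)
  case (reaches_refl c)
  then show ?case
    by (intro exI[of _ 0]) auto
next
  case (reaches_step c c')
  then obtain k where "(astep x ^^ k) (astep x c) = c'"
    and "\<forall>j \<le> k. fst (snd (snd (snd ((astep x ^^ j) (astep x c))))) \<le> B"
    by blast
  moreover have "\<forall>j \<le> Suc k. fst (snd (snd (snd ((astep x ^^ j) c)))) \<le> B"
  proof (intro allI impI)
    fix j
    assume "j \<le> Suc k"
    with reaches_step.hyps(1) \<open>\<forall>j \<le> k. _\<close> show "fst (snd (snd (snd ((astep x ^^ j) c)))) \<le> B"
      by (cases j) (auto simp: funpow_Suc_right simp del: funpow.simps)
  qed
  ultimately show ?case
    by (intro exI[of _ "Suc k"]) (simp add: funpow_Suc_right del: funpow.simps)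
qed

lemma funpow_astep_Halt: "(astep x ^^ n) (Halt, r) = (Halt, r)"
  by (induction n) (auto simp: astep_def)

lemma reaches_Halt_computes:
  assumes "reaches x B astart (Halt, r)"
  shows "tm_computes transducer x (snd (snd (snd r))) \<and> (\<forall>t. conf_whead (tm_conf transducer x t) \<le> B)"
proof -
  from reaches_funpow[OF assms] obtain k where k: "(astep x ^^ k) astart = (Halt, r)"
    and bound: "\<forall>j \<le> k. fst (snd (snd (snd ((astep x ^^ j) astart)))) \<le> B"
    by blast
  have "tm_computes transducer x (snd (snd (snd r)))"
    unfolding tm_computes_def using tm_conf_eq[of x k] k
    by (intro exI[of _ k]) (simp add: encode_config_def st_num_Halt conf_state_def conf_out_def)
  moreover have "conf_whead (tm_conf transducer x t) \<le> B" for t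
  proof -
    have "(astep x ^^ t) astart = (astep x ^^ min t k) astart"
    proof (cases "t \<le> k")
      case False
      then have "(astep x ^^ t) astart = (astep x ^^ (t - k)) ((astep x ^^ k) astart)"
        by (metis funpow_add le_add_diff_inverse2 nat_le_linear o_apply)
      with False k show ?thesis
        by (simp add: funpow_astep_Halt)
    qed simp
    moreover obtain s ih wk wh out where "(astep x ^^ min t k) astart = (s, ih, wk, wh, out)"
      by (cases "(astep x ^^ min t k) astart")
    ultimately show ?thesis
      using tm_conf_eq[of x t] bound[rule_format, of "min t k"]
      by (simp add: encode_config_def conf_whead_def)
  qed
  ultimately show ?thesis
    by blast
qed

definition work_tape :: "bool list \<Rightarrow> nat \<Rightarrow> nat" where
  "work_tape bs j = (if j = 0 then 3 else if j \<le> length bs then (if bs ! (j - 1) then 2 else 1) else 0)"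

lemma work_tape_0 [simp]: "work_tape bs 0 = 3"
  by (simp add: work_tape_def)

lemma work_tape_Nil: "work_tape [] = (\<lambda>_. 0)(0 := 3)"
  by (simp add: work_tape_def fun_eq_iff)

lemma reaches_inter_back:
  assumes "j \<le> length bs" and "ih \<le> length x" and "length bs < B"
    and "reaches x B (Run p (Suc pc), ih, work_tape bs, 0, out) c'"
  shows "reaches x B (InterBack p pc, ih, work_tape bs, j, out) c'"
  using assms(1)
proof (induction j)
  case 0
  then show ?case
    using assms by (intro reaches_stepI) (auto simp: astep_def min_absorb1 fun_upd_idem)
next
  case (Suc j)
  then have "work_tape bs (Suc j) \<noteq> 3"
    by (auto simp: work_tape_def)
  with Suc assms show ?case
    by (intro reaches_stepI) (auto simp: astep_def min_absorb1 fun_upd_idem)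
qed

lemma reaches_inter_fwd:
  assumes "1 \<le> j" "j \<le> length bs + 1" and "ih \<le> length x" and "length bs < B"
    and "reaches x B (Run p (Suc pc), ih, work_tape bs, 0,
      out @ map TBit (interleave (drop (j - 1) bs))) c'"
  shows "reaches x B (InterFwd p pc, ih, work_tape bs, j, out) c'"
  using assms(1,2,5)
proof (induction "length bs + 1 - j" arbitrary: j out)
  case 0
  then have "work_tape bs j = 0"
    by (simp add: work_tape_def)
  with 0 assms show ?case
    by (intro reaches_stepI) (auto simp: astep_def min_absorb1 fun_upd_idem intro: reaches_inter_back)
next
  case (Suc k)
  let ?b = "bs ! (j - 1)"
  have j: "j - 1 < length bs" "Suc (j - 1) = j"
    using Suc by auto
  have w: "work_tape bs j = (if ?b then 2 else 1)"
    using j by (simp add: work_tape_def)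
  have "drop (j - 1) bs = ?b # drop j bs"
    using j by (metis Cons_nth_drop_Suc)
  then have "reaches x B (InterFwd p pc, ih, work_tape bs, Suc j, out @ [TBit True, TBit ?b]) c'"
    using Suc by (intro Suc.hyps) auto
  then have "reaches x B (InterBit p pc, ih, work_tape bs, j, out @ [TBit True]) c'"
    using Suc.prems assms(3,4) w by (intro reaches_stepI) (auto simp: astep_def min_absorb1 fun_upd_idem)
  then show ?case
    using Suc.prems assms(3,4) w by (intro reaches_stepI) (auto simp: astep_def min_absorb1 fun_upd_idem)
qed

lemma instr_sem_drop: "\<exists>k. snd (instr_sem bs i r) = drop k r"
proof (cases i)
  case Copy
  then show ?thesis
    by (auto simp: dropWhile_eq_drop)
next
  case Skip
  then show ?thesis
    by (auto intro: exI[of _ 1] simp: drop_Suc)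
next
  case Sym
  then show ?thesis
    by (cases r) (auto intro: exI[of _ 1] split: tok.split)
qed (auto intro!: exI[of _ 0])

lemma drop_length_diff: "r = drop n x \<Longrightarrow> drop (length x - length r) x = r"
  by (cases "n \<le> length x") auto

lemma reaches_copy:
  fixes x :: "'s tok list"
  assumes "(prog p ! pc :: 's instr) = Copy" and "pc < prog_len p" and "ih \<le> length x" and "wh \<le> B"
    and "reaches x B (Run p (Suc pc), length x - length (dropWhile is_bit (drop ih x)), wk, wh,
      out @ takeWhile is_bit (drop ih x)) c'"
  shows "reaches x B (Run p pc, ih, wk, wh, out) c'"
  using assms(3,5)
proof (induction "length x - ih" arbitrary: ih out)
  case 0
  with assms show ?case
    by (intro reaches_stepI) (auto simp: astep_def read_def fun_upd_idem)
next
  case (Suc k)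
  then have drop: "drop ih x = x ! ih # drop (Suc ih) x"
    by (simp add: Cons_nth_drop_Suc)
  show ?case
  proof (cases "is_bit (x ! ih)")
    case True
    then obtain b where b: "x ! ih = TBit b"
      by (cases "x ! ih") auto
    have "reaches x B (Run p pc, Suc ih, wk, wh, out @ [TBit b]) c'"
      using Suc b drop by (intro Suc.hyps) auto
    with Suc assms b show ?thesis
      by (intro reaches_stepI) (auto simp: astep_def read_def fun_upd_idem)
  next
    case False
    then have "delta (Run p pc) (read x ih) w = (Run p (Suc pc), Stay, w, Stay, None)" for w
      using Suc assms by (cases "x ! ih") (auto simp: read_def)
    with Suc assms False drop show ?thesis
      by (intro reaches_stepI) (auto simp: astep_def min_absorb1 fun_upd_idem)
  qed
qed

lemma reaches_instr:
  fixes x :: "'s tok list"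
  assumes "pc < prog_len p" and ih: "ih \<le> length x" and "length bs < B"
    and sem: "instr_sem bs (prog p ! pc) (drop ih x) = (v, r)"
    and run: "reaches x B (Run p (Suc pc), length x - length r, work_tape bs, 0, out @ v) c'"
  shows "reaches x B (Run p pc, ih, work_tape bs, 0, out) c'"
proof (cases "prog p ! pc :: 's instr")
  case (Emit t)
  with sem ih have "v = [t]" "length x - length r = ih"
    by auto
  with Emit assms show ?thesis
    by (intro reaches_stepI) (simp_all add: astep_def min_absorb1 fun_upd_idem)
next
  case Inter
  with sem ih have "v = map TBit (interleave bs)" "length x - length r = ih"
    by auto
  with assms have "reaches x B (InterFwd p pc, ih, work_tape bs, 1, out) c'"
    by (intro reaches_inter_fwd) simp_all
  with Inter assms show ?thesis
    by (intro reaches_stepI) (simp_all add: astep_def min_absorb1 fun_upd_idem)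
next
  case Copy
  with sem have "v = takeWhile is_bit (drop ih x)" "r = dropWhile is_bit (drop ih x)"
    by auto
  with run show ?thesis
    using reaches_copy[OF Copy assms(1) ih] by simp
next
  case Skip
  with sem ih have "v = []" "length x - length r = min (Suc ih) (length x)"
    by (auto simp: drop_Suc[symmetric] min_def)
  with Skip assms show ?thesis
    by (intro reaches_stepI) (simp_all add: astep_def fun_upd_idem)
next
  case Sym
  show ?thesis
  proof (cases "ih < length x")
    case False
    with sem ih Sym have "v = []" "r = []" "ih = length x"
      by auto
    with Sym assms show ?thesis
      by (intro reaches_stepI) (simp_all add: astep_def read_def fun_upd_idem)
  next
    case True
    then have drop: "drop ih x = x ! ih # drop (Suc ih) x"
      by (simp add: Cons_nth_drop_Suc)
    have "length x - length (drop (Suc ih) x) = Suc ih"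
      using True by simp
    with sem Sym drop have "v = (case x ! ih of TSym a \<Rightarrow> [TSym a] | _ \<Rightarrow> [])"
      "length x - length r = Suc ih"
      by (auto split: tok.splits)
    with Sym assms True show ?thesis
      by (intro reaches_stepI) (auto simp: astep_def read_def fun_upd_idem split: tok.splits)
  qed
qed

lemma reaches_prog:
  fixes x :: "'s tok list"
  assumes "prog_sem bs (drop pc (prog p)) (drop ih x) = (v, r)"
    and "pc \<le> prog_len p" and "ih \<le> length x" and "length bs < B"
    and "reaches x B (Loop p, length x - length r, work_tape bs, 0, out @ v) c'"
  shows "reaches x B (Run p pc, ih, work_tape bs, 0, out) c'"
  using assms(1-3,5)
proof (induction "prog_len p - pc" arbitrary: pc ih out v)
  case 0
  with assms(4) show ?case
    by (intro reaches_stepI) (auto simp: astep_def min_absorb1 fun_upd_idem)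
next
  case (Suc k)
  then have drop: "drop pc (prog p) = (prog p ! pc :: 's instr) # drop (Suc pc) (prog p)"
    by (simp add: Cons_nth_drop_Suc)
  obtain v1 r1 where sem1: "instr_sem bs (prog p ! pc) (drop ih x) = (v1, r1)"
    by (cases "instr_sem bs (prog p ! pc) (drop ih x)")
  obtain v2 where sem2: "prog_sem bs (drop (Suc pc) (prog p)) r1 = (v2, r)" and v: "v = v1 @ v2"
    using Suc.prems(1) by (simp add: drop sem1 split: prod.splits)
  obtain n where "r1 = drop n (drop ih x)"
    using instr_sem_drop[of bs "prog p ! pc" "drop ih x"] sem1 by auto
  then have r1: "drop (length x - length r1) x = r1"
    by (intro drop_length_diff[of _ "n + ih"]) simp
  have "reaches x B (Run p (Suc pc), length x - length r1, work_tape bs, 0, out @ v1) c'"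
    using Suc sem2 r1 v by (intro Suc.hyps) auto
  moreover have "pc < prog_len p"
    using Suc.hyps(2) by simp
  ultimately show ?case
    using reaches_instr[OF _ Suc.prems(3) assms(4) sem1] by blast
qed

lemma reaches_loop:
  fixes x :: "'s tok list" and f :: "'a \<Rightarrow> 's tok list"
  assumes "x = pre @ enc_items f es @ TClose # post"
    and sem: "\<And>e r. e \<in> set es \<Longrightarrow> prog_sem bs (prog p) (f e @ TComma # r) = (g e, r)"
    and no_close: "\<And>e. e \<in> set es \<Longrightarrow> TClose \<notin> set (f e)"
    and B: "length bs < B"
    and "reaches x B (Next p, Suc (length pre + length (enc_items f es)), work_tape bs, 0,
      out @ concat (map g es)) c'"
  shows "reaches x B (Loop p, length pre, work_tape bs, 0, out) c'"
  using assms(1,5) sem no_close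
proof (induction es arbitrary: pre out)
  case Nil
  with B show ?case
    by (intro reaches_stepI) (auto simp: astep_def read_def fun_upd_idem)
next
  case (Cons e es)
  let ?rest = "enc_items f es @ TClose # post"
  have x: "x = (pre @ f e @ [TComma]) @ ?rest"
    using Cons.prems(1) by simp
  have "reaches x B (Loop p, length (pre @ f e @ [TComma]), work_tape bs, 0, out @ g e) c'"
    using Cons.prems by (intro Cons.IH[OF x]) (auto simp: add.assoc)
  moreover have "prog_sem bs (drop 0 (prog p)) (drop (length pre) x) = (g e, ?rest)"
    using Cons.prems(3)[of e ?rest] x by simp
  ultimately have "reaches x B (Run p 0, length pre, work_tape bs, 0, out) c'"
    using reaches_prog[of bs 0 p "length pre" x "g e" ?rest B out c'] B x by simp
  moreover have "read x (length pre) \<noteq> Some TClose"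
    using Cons.prems(4)[of e] x by (cases "f e") (auto simp: read_def nth_append)
  ultimately show ?case
    using B x by (intro reaches_stepI) (auto simp: astep_def fun_upd_idem min_absorb1)
qed

lemma TClose_notin_enc_nat: "TClose \<notin> set (enc_nat n)"
  by (auto simp: enc_nat_eq_lsb_bits)

lemma TClose_notin_enc_tr: "TClose \<notin> set (enc_tr t)"
  by (auto simp: enc_tr_def TClose_notin_enc_nat split: prod.split)

lemma reaches_part:
  fixes x :: "'s tok list"
  assumes "x = pre @ enc_list f es @ t # post" and "length (lsb_bits i) < B"
    and sem: "\<And>e r. prog_sem (lsb_bits i) (prog p) (f e @ TComma # r) = (enc_edge (h e) @ [TComma], r)"
    and no_close: "\<And>e. TClose \<notin> set (f e)"
    and "reaches x B (next_part p, Suc (length pre + length (enc_list f es)), work_tape (lsb_bits i), 0,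
      out @ enc_items enc_edge (map h es)) c'"
  shows "reaches x B (Loop p, Suc (length pre), work_tape (lsb_bits i), 0, out) c'"
proof -
  have x: "x = (pre @ [TOpen]) @ enc_items f es @ TClose # t # post"
    using assms(1) by (simp add: enc_list_eq)
  have "reaches x B (Next p, Suc (length (pre @ [TOpen]) + length (enc_items f es)),
      work_tape (lsb_bits i), 0, out @ concat (map (\<lambda>e. enc_edge (h e) @ [TComma]) es)) c'"
    using assms(2,5) x by (intro reaches_stepI) (auto simp: astep_def fun_upd_idem enc_list_eq enc_items_def o_def)
  then show ?thesis
    using reaches_loop[OF x] sem no_close assms(2) by simp
qed

lemma reaches_nfa:
  fixes x :: "'s tok list"
  assumes x: "x = pre @ enc_nfa X @ post" and B: "length (lsb_bits i) < B"
    and "reaches x B (next_part (Transitions s), length pre + length (enc_nfa X), work_tape (lsb_bits i), 0,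
      out @ enc_items enc_edge (nfa_edges i s X)) c'"
  shows "reaches x B (NfaStart s, length pre, work_tape (lsb_bits i), 0, out) c'"
proof -
  let ?I = "enc_list enc_nat (initial X)" and ?F = "enc_list enc_nat (final X)"
    and ?T = "enc_list enc_tr (trans X)"
  let ?OI = "enc_items enc_edge (map (init_edge i s) (initial X))"
    and ?OF = "enc_items enc_edge (map (final_edge i s) (final X))"
  have "reaches x B (Loop (Transitions s), Suc (length (pre @ TOpen # ?I @ ?F)), work_tape (lsb_bits i), 0,
      out @ ?OI @ ?OF) c'"
    by (rule reaches_part[where f = enc_tr and es = "trans X" and h = "trans_edge i s" and t = TClose
        and post = post])
      (use assms in \<open>simp_all add: enc_nfa_def prog_sem_Transitions TClose_notin_enc_tr nfa_edges_def add.assoc del: prog.simps next_part.simps\<close>)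
  then have "reaches x B (Loop (Finals s), Suc (length (pre @ TOpen # ?I)), work_tape (lsb_bits i), 0,
      out @ ?OI) c'"
    by (intro reaches_part[where f = enc_nat and es = "final X" and h = "final_edge i s" and t = TOpen
        and post = "tl ?T @ TClose # post"])
      (use x B in \<open>simp_all add: enc_nfa_def prog_sem_Finals TClose_notin_enc_nat enc_list_eq add.assoc del: prog.simps\<close>)
  then have "reaches x B (Loop (Initials s), Suc (length (pre @ [TOpen])), work_tape (lsb_bits i), 0, out) c'"
    by (intro reaches_part[where f = enc_nat and es = "initial X" and h = "init_edge i s" and t = TOpen
        and post = "tl ?F @ ?T @ TClose # post"])
      (use x B in \<open>simp_all add: enc_nfa_def prog_sem_Initials TClose_notin_enc_nat enc_list_eq add.assoc del: prog.simps\<close>)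
  then show ?thesis
    using x B by (intro reaches_stepI) (auto simp: astep_def fun_upd_idem enc_nfa_def intro!: reaches_stepI)
qed

lemma work_tape_update: "j < length cs \<Longrightarrow> (work_tape cs)(Suc j := (if b then 2 else 1)) = work_tape (cs[j := b])"
  by (auto simp: work_tape_def fun_eq_iff nth_list_update)

lemma work_tape_snoc: "(work_tape cs)(Suc (length cs) := 2) = work_tape (cs @ [True])"
  by (auto simp: work_tape_def fun_eq_iff nth_append)

lemma reaches_inc_back:
  assumes "m \<le> length cs" and "ih \<le> length x" and "length cs \<le> B"
    and "reaches x B (CompStart, ih, work_tape cs, 0, out) c'"
  shows "reaches x B (IncBack, ih, work_tape cs, m, out) c'"
  using assms(1)
proof (induction m)
  case 0
  with assms show ?case
    by (intro reaches_stepI) (auto simp: astep_def min_absorb1 fun_upd_idem)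
next
  case (Suc m)
  then have "work_tape cs (Suc m) \<noteq> 3"
    by (auto simp: work_tape_def)
  with Suc assms show ?case
    by (intro reaches_stepI) (auto simp: astep_def min_absorb1 fun_upd_idem)
qed

text \<open>Incrementing the counter, generalised over the \<open>k\<close> carries already propagated.\<close>
lemma reaches_inc:
  assumes "ih \<le> length x" and "k + length bs < B"
    and "reaches x B (CompStart, ih, work_tape (replicate k False @ incr bs), 0, out) c'"
  shows "reaches x B (Inc, ih, work_tape (replicate k False @ bs), Suc k, out) c'"
  using assms(2,3)
proof (induction bs arbitrary: k)
  case Nil
  have "(work_tape (replicate k False))(Suc k := 2) = work_tape (replicate k False @ [True])"
    using work_tape_snoc[of "replicate k False"] by simp
  moreover have "work_tape (replicate k False) (Suc k) = 0"
    by (simp add: work_tape_def)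
  ultimately show ?case
    using Nil assms(1) by (intro reaches_stepI) (auto simp: astep_def min_absorb1 intro: reaches_inc_back)
next
  case (Cons b bs)
  have digit: "work_tape (replicate k False @ b # bs) (Suc k) = (if b then 2 else 1)"
    by (simp add: work_tape_def nth_append)
  show ?case
  proof (cases b)
    case False
    have "(work_tape (replicate k False @ False # bs))(Suc k := 2) = work_tape (replicate k False @ True # bs)"
      using work_tape_update[of k "replicate k False @ False # bs" True] by (simp add: list_update_append)
    with Cons.prems False digit assms(1) show ?thesis
      by (intro reaches_stepI) (auto simp: astep_def min_absorb1 intro: reaches_inc_back)
  next
    case True
    have "(work_tape (replicate k False @ True # bs))(Suc k := 1) = work_tape (replicate (Suc k) False @ bs)"
      using work_tape_update[of k "replicate k False @ True # bs" False]
      by (simp add: list_update_append replicate_append_same[symmetric])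
    moreover have "reaches x B (Inc, ih, work_tape (replicate (Suc k) False @ bs), Suc (Suc k), out) c'"
      using Cons.prems True by (intro Cons.IH) (auto simp: replicate_append_same[symmetric])
    ultimately show ?thesis
      using Cons.prems True digit assms(1) by (intro reaches_stepI) (auto simp: astep_def min_absorb1)
  qed
qed

lemma reaches_comp:
  fixes x :: "'s tok list"
  assumes x: "x = pre @ comp_enc c @ post" and B: "length (lsb_bits (Suc i)) < B"
    and "reaches x B (CompStart, length pre + length (comp_enc c), work_tape (lsb_bits (Suc i)), 0,
      out @ enc_items enc_edge (comp_edges i c)) c'"
  shows "reaches x B (CompStart, length pre, work_tape (lsb_bits i), 0, out) c'"
proof -
  let ?A = "enc_nfa (fst c)" and ?B = "enc_nfa (snd c)"
  let ?OA = "enc_items enc_edge (nfa_edges i False (fst c))"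
  have B': "length (lsb_bits i) < B"
    using B length_lsb_bits_mono[of i "Suc i"] by simp
  have "reaches x B (Inc, Suc (length pre + length ?A + length ?B), work_tape (lsb_bits i), Suc 0,
      out @ enc_items enc_edge (comp_edges i c)) c'"
    by (rule reaches_inc[where k = 0, simplified])
      (use assms B' in \<open>simp_all add: lsb_bits_Suc comp_enc_def add.assoc\<close>)
  then have "reaches x B (CompEnd, length pre + length ?A + length ?B, work_tape (lsb_bits i), 0,
      out @ ?OA @ enc_items enc_edge (nfa_edges i True (snd c))) c'"
    using x B' by (intro reaches_stepI) (auto simp: astep_def fun_upd_idem comp_enc_def comp_edges_def)
  then have "reaches x B (NfaStart True, length (pre @ ?A), work_tape (lsb_bits i), 0, out @ ?OA) c'"
    using x B' by (intro reaches_nfa[where post = "TComma # post"]) (simp_all add: comp_enc_def)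
  then have "reaches x B (NfaStart False, length pre, work_tape (lsb_bits i), 0, out) c'"
    using x B' by (intro reaches_nfa[where post = "?B @ TComma # post"]) (simp_all add: comp_enc_def)
  moreover have "read x (length pre) = Some TOpen"
    using x by (simp add: read_def comp_enc_def enc_nfa_def)
  ultimately show ?thesis
    using x B' by (intro reaches_stepI) (auto simp: astep_def fun_upd_idem min_absorb1)
qed

lemma reaches_comps:
  fixes x :: "'s tok list"
  assumes "x = pre @ concat (map comp_enc cs) @ post" and "length (lsb_bits (i + length cs)) < B"
    and "reaches x B (CompStart, length pre + length (concat (map comp_enc cs)),
      work_tape (lsb_bits (i + length cs)), 0,
      out @ enc_items enc_edge (concat (map (case_prod comp_edges) (enumerate i cs)))) c'"
  shows "reaches x B (CompStart, length pre, work_tape (lsb_bits i), 0, out) c'"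
  using assms
proof (induction cs arbitrary: pre i out)
  case (Cons c cs)
  have "length (lsb_bits (Suc i)) < B"
    using Cons.prems(2) length_lsb_bits_mono[of "Suc i" "i + length (c # cs)"] by simp
  moreover have "reaches x B (CompStart, length (pre @ comp_enc c), work_tape (lsb_bits (Suc i)), 0,
      out @ enc_items enc_edge (comp_edges i c)) c'"
    using Cons.prems by (intro Cons.IH) (simp_all add: add.assoc)
  ultimately show ?case
    using reaches_comp[of x pre c _ i B] Cons.prems(1) by simp
qed (simp add: enc_items_def)

lemma reaches_finish:
  assumes "ih < length x" and "x ! ih = TClose"
  shows "reaches x B (CompStart, ih, wk, 0, out) (Halt, ih, wk, 0, out @ [TClose, TComma, TComma, TClose])"
proof -
  let ?c = "(Halt, ih, wk, 0, out @ [TClose, TComma, TComma, TClose])"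
  have ih: "min ih (length x) = ih"
    using assms(1) by simp
  have "reaches x B (Finish (Suc (Suc 0)), ih, wk, 0, out @ [TClose, TComma, TComma]) ?c"
    by (intro reaches_stepI) (simp_all add: astep_def ih fun_upd_idem reaches_refl)
  then have "reaches x B (Finish (Suc 0), ih, wk, 0, out @ [TClose, TComma]) ?c"
    by (intro reaches_stepI) (simp_all add: astep_def ih fun_upd_idem)
  then have "reaches x B (Finish 0, ih, wk, 0, out @ [TClose]) ?c"
    by (intro reaches_stepI) (simp_all add: astep_def ih fun_upd_idem)
  then show ?thesis
    using assms by (intro reaches_stepI) (simp_all add: astep_def read_def ih fun_upd_idem)
qed

lemma reaches_count:
  assumes "j \<le> length x" and "0 < length x"
    and "reaches x B (Rewind 0, length x - 1, wk, 0,
      out @ replicate (4 * (length x - j)) (TBit True) @ [TComma]) c'"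
  shows "reaches x B (Count 0, j, wk, 0, out) c'"
  using assms
proof (induction "length x - j" arbitrary: j out)
  case 0
  then show ?case
    by (intro reaches_stepI) (auto simp: astep_def read_def fun_upd_idem)
next
  case (Suc m)
  then have j: "j < length x"
    by simp
  have "4 * (length x - j) = 4 + 4 * (length x - Suc j)"
    using j by simp
  then have "reaches x B (Count 0, Suc j, wk, 0, out @ replicate 4 (TBit True)) c'"
    using Suc j by (intro Suc.hyps) (simp_all add: replicate_add)
  then have "reaches x B (Count (Suc (Suc (Suc 0))), j, wk, 0, out @ replicate 3 (TBit True)) c'"
    using j by (intro reaches_stepI) (simp_all add: astep_def read_def fun_upd_idem numeral_eq_Suc)
  then have "reaches x B (Count (Suc (Suc 0)), j, wk, 0, out @ replicate 2 (TBit True)) c'"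
    using j by (intro reaches_stepI) (simp_all add: astep_def read_def fun_upd_idem numeral_eq_Suc)
  then have "reaches x B (Count (Suc 0), j, wk, 0, out @ [TBit True]) c'"
    using j by (intro reaches_stepI) (simp_all add: astep_def read_def fun_upd_idem numeral_eq_Suc)
  then show ?case
    using j by (intro reaches_stepI) (simp_all add: astep_def read_def fun_upd_idem)
qed

lemma take_takeWhile_eq: "n \<le> length (takeWhile (\<lambda>t. t = a) xs) \<Longrightarrow> take n xs = replicate n a"
proof -
  assume n: "n \<le> length (takeWhile (\<lambda>t. t = a) xs)"
  then have "take n xs = take n (takeWhile (\<lambda>t. t = a) xs)"
    by (metis min.absorb1 take_take takeWhile_eq_take)
  moreover have "\<forall>t \<in> set (take n (takeWhile (\<lambda>t. t = a) xs)). t = a"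
    by (auto dest: in_set_takeD set_takeWhileD)
  ultimately show ?thesis
    using n by (metis length_take min.absorb2 replicate_length_same)
qed

lemma reaches_rewind_0:
  assumes "x ! 0 = TOpen" and "0 < length x" and "k \<le> 3"
    and "reaches x B (CompStart, 1, work_tape [], 0, out @ [TOpen]) c'"
  shows "reaches x B (Rewind k, 0, \<lambda>_. 0, 0, out) c'"
  using assms(3)
proof (induction "3 - k" arbitrary: k)
  case 0
  with assms show ?case
    by (intro reaches_stepI) (simp_all add: astep_def read_def min_def Suc_le_eq work_tape_Nil)
next
  case (Suc m)
  then have "reaches x B (Rewind (Suc k), 0, \<lambda>_. 0, 0, out) c'"
    by (intro Suc.hyps) auto
  moreover have "k < 3"
    using Suc.hyps(2) by simp
  ultimately show ?case
    using assms by (intro reaches_stepI) (simp_all add: astep_def read_def fun_upd_idem work_tape_Nil)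
qed

text \<open>The counter \<open>k\<close> of \<open>Rewind k\<close> is the number of \<open>TOpen\<close> read just before; the absence of four
  consecutive \<open>TOpen\<close> guarantees that it reaches \<open>3\<close> only at the left end.\<close>
lemma reaches_rewind:
  assumes no4: "\<forall>i. take 4 (drop i x) \<noteq> replicate 4 TOpen" and "x ! 0 = TOpen"
    and "j < length x" and "k = length (takeWhile (\<lambda>t. t = TOpen) (drop (Suc j) x))"
    and "reaches x B (CompStart, 1, work_tape [], 0, out @ [TOpen]) c'"
  shows "reaches x B (Rewind k, j, \<lambda>_. 0, 0, out) c'"
  using assms(3,4)
proof (induction j arbitrary: k)
  case 0
  have "k < 3"
  proof (rule ccontr)
    assume "\<not> k < 3"
    then have "take 3 (drop 1 x) = replicate 3 TOpen"
      using 0 take_takeWhile_eq[of 3 TOpen "drop 1 x"] by simp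
    then have "take 4 (drop 0 x) = replicate 4 TOpen"
      using assms(2) 0 by (cases x) (simp_all add: numeral_eq_Suc)
    with no4 show False
      by blast
  qed
  then show ?case
    using reaches_rewind_0[OF assms(2) _ _ assms(5)] 0 by simp
next
  case (Suc j)
  have drop: "drop (Suc j) x = x ! Suc j # drop (Suc (Suc j)) x"
    using Suc.prems(1) by (simp add: Cons_nth_drop_Suc)
  show ?case
  proof (cases "x ! Suc j = TOpen")
    case True
    have "k < 3"
    proof (rule ccontr)
      assume "\<not> k < 3"
      then have "take 3 (drop (Suc (Suc j)) x) = replicate 3 TOpen"
        using Suc.prems(2) take_takeWhile_eq[of 3 TOpen "drop (Suc (Suc j)) x"] by simp
      then have "take 4 (drop (Suc j) x) = replicate 4 TOpen"
        using True drop by (simp add: numeral_eq_Suc)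
      with no4 show False
        by blast
    qed
    moreover have "reaches x B (Rewind (Suc k), j, \<lambda>_. 0, 0, out) c'"
      using Suc True drop by (intro Suc.IH) auto
    ultimately show ?thesis
      using Suc.prems True by (intro reaches_stepI) (simp_all add: astep_def read_def fun_upd_idem work_tape_Nil)
  next
    case False
    have "reaches x B (Rewind 0, j, \<lambda>_. 0, 0, out) c'"
      using Suc False drop by (intro Suc.IH) auto
    then show ?thesis
      using Suc.prems False by (intro reaches_stepI) (simp_all add: astep_def read_def fun_upd_idem work_tape_Nil)
  qed
qed

fun open_runs_ok :: "nat \<Rightarrow> 's tok list \<Rightarrow> bool" where
  "open_runs_ok k [] = True"
| "open_runs_ok k (t # ts) = (if t = TOpen then k < 3 \<and> open_runs_ok (Suc k) ts else open_runs_ok 0 ts)"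

fun open_run_after :: "nat \<Rightarrow> 's tok list \<Rightarrow> nat" where
  "open_run_after k [] = k"
| "open_run_after k (t # ts) = (if t = TOpen then open_run_after (Suc k) ts else open_run_after 0 ts)"

lemma open_runs_ok_append:
  "open_runs_ok k (xs @ ys) \<longleftrightarrow> open_runs_ok k xs \<and> open_runs_ok (open_run_after k xs) ys"
  by (induction xs arbitrary: k) auto

lemma open_run_after_append: "open_run_after k (xs @ ys) = open_run_after (open_run_after k xs) ys"
  by (induction xs arbitrary: k) auto

lemma open_runs_ok_no_TOpen: "TOpen \<notin> set xs \<Longrightarrow> open_runs_ok k xs"
proof (induction xs arbitrary: k)
  case (Cons t xs)
  then show ?case
    by auto
qed simp

lemma open_runs_ok_take_drop:
  "open_runs_ok k xs \<Longrightarrow> take 4 (drop j xs) \<noteq> replicate 4 TOpen"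
proof (induction xs arbitrary: k j)
  case (Cons t xs)
  show ?case
  proof (cases j)
    case 0
    show ?thesis
    proof
      assume "take 4 (drop j (t # xs)) = replicate 4 TOpen"
      then have "t # xs = replicate 4 TOpen @ drop 4 (t # xs)"
        using 0 by (metis append_take_drop_id drop_0)
      then have "open_runs_ok k (replicate 4 TOpen @ drop 4 (t # xs))"
        using Cons.prems by metis
      then show False
        by (simp add: numeral_eq_Suc)
    qed
  next
    case (Suc j')
    from Cons.prems have "open_runs_ok (if t = TOpen then Suc k else 0) xs"
      by (auto split: if_splits)
    with Cons.IH Suc show ?thesis
      by simp
  qed
qed simp

lemma TOpen_notin_enc_items_nat: "TOpen \<notin> set (enc_items enc_nat ns)"
  by (auto simp: enc_items_def enc_nat_eq_lsb_bits)

lemma TOpen_notin_enc_items_tr: "TOpen \<notin> set (enc_items enc_tr ts)"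
  by (auto simp: enc_items_def enc_tr_def enc_nat_eq_lsb_bits split: prod.splits)

lemma open_runs_ok_enc_nfa:
  "k \<le> 1 \<Longrightarrow> open_runs_ok k (enc_nfa X) \<and> open_run_after k (enc_nfa X) = 0"
  by (simp add: enc_nfa_def enc_list_eq open_runs_ok_append open_run_after_append
      open_runs_ok_no_TOpen TOpen_notin_enc_items_nat TOpen_notin_enc_items_tr)

lemma open_runs_ok_comps:
  "k \<le> 1 \<Longrightarrow> open_runs_ok k (concat (map comp_enc cs)) \<and> open_run_after k (concat (map comp_enc cs)) \<le> 1"
proof (induction cs arbitrary: k)
  case (Cons c cs)
  then show ?case
    using open_runs_ok_enc_nfa[of k "fst c"] open_runs_ok_enc_nfa[of 0 "snd c"] Cons.IH[of 0]
    by (simp add: comp_enc_def open_runs_ok_append open_run_after_append)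
qed simp

lemma enc_rec_no_four_opens: "take 4 (drop j (enc_rec Rs)) \<noteq> replicate 4 TOpen"
proof -
  have "open_runs_ok 0 (enc_rec Rs)"
    using open_runs_ok_comps[of 1 Rs] by (simp add: enc_rec_eq open_runs_ok_append)
  then show ?thesis
    by (rule open_runs_ok_take_drop)
qed

lemma enc_out_reduction_graph:
  "enc_out (reduction_graph Rs) 0 0 = TOpen # replicate (4 * length (enc_rec Rs)) (TBit True) @ TComma
     # TOpen # enc_items enc_edge (reduction_edges Rs) @ [TClose, TComma, TComma, TClose]"
  using lsb_bits_mask[of "4 * length (enc_rec Rs)"]
  by (simp add: enc_out_def reduction_graph_def enc_nat_eq_lsb_bits enc_list_eq)

lemma reaches_enc_rec:
  "reaches (enc_rec Rs) (Suc (length (lsb_bits (length Rs)))) astart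
     (Halt, length (enc_rec Rs) - 1, work_tape (lsb_bits (length Rs)), 0, enc_out (reduction_graph Rs) 0 0)"
  (is "reaches ?x ?B _ ?halt")
proof -
  let ?n = "length ?x" and ?comps = "concat (map comp_enc Rs)"
  let ?out = "TOpen # replicate (4 * ?n) (TBit True) @ [TComma]"
  have x: "?x = [TOpen] @ ?comps @ [TClose]"
    by (simp add: enc_rec_eq)
  have "reaches ?x ?B (CompStart, Suc (length ?comps), work_tape (lsb_bits (length Rs)), 0,
      ?out @ TOpen # enc_items enc_edge (reduction_edges Rs)) ?halt"
    using reaches_finish[of "Suc (length ?comps)" ?x ?B "work_tape (lsb_bits (length Rs))"
        "?out @ TOpen # enc_items enc_edge (reduction_edges Rs)"] x
    by (simp add: enc_out_reduction_graph)
  then have "reaches ?x ?B (CompStart, 1, work_tape [], 0, ?out @ [TOpen]) ?halt"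
    using reaches_comps[OF x, where i = 0] by (simp add: reduction_edges_def)
  then have "reaches ?x ?B (Rewind 0, ?n - 1, \<lambda>_. 0, 0, ?out) ?halt"
    using enc_rec_no_four_opens[of _ Rs] by (intro reaches_rewind) (simp_all add: enc_rec_eq)
  then have "reaches ?x ?B (Count 0, 0, \<lambda>_. 0, 0, [TOpen]) ?halt"
    by (intro reaches_count) (simp_all add: enc_rec_eq)
  then show ?thesis
    unfolding astart_def by (intro reaches_stepI) (simp_all add: astep_def fun_upd_idem)
qed

lemma length_lsb_bits_log:
  assumes "k \<le> n"
  shows "real (Suc (length (lsb_bits k))) \<le> 3 * log 2 (real n + 2)"
proof -
  let ?L = "length (lsb_bits k)"
  have "(2::nat) ^ ?L \<le> 2 * (n + 2)"
    using two_pow_length_lsb_bits[of k] assms by (cases "k = 0") auto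
  then have "real (2 ^ ?L) \<le> real (2 * (n + 2))"
    by (simp only: of_nat_le_iff)
  then have "(2::real) ^ ?L \<le> 2 * (real n + 2)"
    by simp
  then have "log 2 ((2::real) ^ ?L) \<le> log 2 (2 * (real n + 2))"
    by (subst log_le_cancel_iff) auto
  moreover have "log 2 ((2::real) ^ ?L) = real ?L"
    by (simp add: log_nat_power)
  moreover have "log 2 (2 * (real n + 2)) = 1 + log 2 (real n + 2)"
    by (subst log_mult_pos) auto
  moreover have "1 \<le> log 2 (real n + 2)"
    by simp
  ultimately show ?thesis
    by linarith
qed

lemma transducer_run:
  "tm_logspace_on transducer 3 (enc_rec Rs) \<and> tm_computes transducer (enc_rec Rs) (enc_out (reduction_graph Rs) 0 0)"
proof -
  have "tm_computes transducer (enc_rec Rs) (enc_out (reduction_graph Rs) 0 0)"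
    and whead: "\<And>t. conf_whead (tm_conf transducer (enc_rec Rs) t) \<le> Suc (length (lsb_bits (length Rs)))"
    using reaches_Halt_computes[OF reaches_enc_rec[of Rs]] by auto
  moreover have "tm_logspace_on transducer 3 (enc_rec Rs)"
    unfolding tm_logspace_on_def
  proof
    fix t
    have "real (conf_whead (tm_conf transducer (enc_rec Rs) t)) \<le> real (Suc (length (lsb_bits (length Rs))))"
      using whead[of t] by (simp only: of_nat_le_iff)
    also have "\<dots> \<le> 3 * log 2 (real (length (enc_rec Rs)) + 2)"
      using length_lsb_bits_log length_enc_rec_ge[of Rs] by simp
    finally show "real (conf_whead (tm_conf transducer (enc_rec Rs) t))
        \<le> real 3 * log 2 (real (length (enc_rec Rs)) + 2)"
      by simp
  qed
  ultimately show ?thesis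
    by blast
qed

theorem mainTheorem2:
  fixes S :: "('s::finite list \<times> 's list) set"
  shows "\<exists>Q :: ('s + nat) crpq. crpq_wf Q \<and>
           (\<exists>(M :: ('s tok, 's tok) ltm) (c :: nat). tm_wf M \<and>
              (\<forall>Rs :: ('s nfa \<times> 's nfa) list.
                 tm_logspace_on M c (enc_rec Rs) \<and>
                 (\<exists>(G :: ('s + nat) graph) v v'.
                    graph_wf G \<and> v < gn G \<and> v' < gn G \<and>
                    tm_computes M (enc_rec Rs) (enc_out G v v') \<and>
                    (crpq_holds (liftS S) G Q v v' \<longleftrightarrow> rec_rel Rs \<inter> S \<noteq> {}))))"
proof (intro exI[of _ reduction_query] exI[of _ transducer] exI[of _ 3] conjI allI
    reduction_query_wf transducer_wf)
  fix Rs :: "('s nfa \<times> 's nfa) list"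
  show "tm_logspace_on transducer 3 (enc_rec Rs)"
    using transducer_run by blast
  have "0 < gn (reduction_graph Rs)"
    using one_less_power[of "2::nat" "4 * length (enc_rec Rs)"] by (simp add: reduction_graph_def enc_rec_eq)
  with transducer_run reduction_graph_wf show "\<exists>(G :: ('s + nat) graph) v v'.
      graph_wf G \<and> v < gn G \<and> v' < gn G \<and> tm_computes transducer (enc_rec Rs) (enc_out G v v') \<and>
      (crpq_holds (liftS S) G reduction_query v v' \<longleftrightarrow> rec_rel Rs \<inter> S \<noteq> {})"
    using reduction_query_sound reduction_query_complete by meson
qed

end
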